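(* Let $C$ be a set of colours, $\mathrm{val}:C^\omega\to X$ a $C$-valuation such that $X$ is well-founded, and $m\in\mathbb N$. If for every cardinal $\kappa$ there exists a well-monotone $(\kappa,\mathrm{val})$-universal $C$-graph of width $\le m$, then for every cardinal $\kappa$ there also exists a well-monotone $\varepsilon$-separated monotone graph of breadth $\le m$ which is $(\kappa,\mathrm{val}^\varepsilon)$-universal; consequently $\mathrm{val}$ has $\varepsilon$-memory $\le m$.
   Context: For a set $D$ of colours: a $D$-graph $G$ is a set $V(G)$ with edges $E(G)\subseteq V(G)\times D\times V(G)$, written $v\xrightarrow{c}v'$, every vertex having an outgoing edge; a $D$-tree is a $D$-graph with a root $t_0$ such that every vertex has a unique path from $t_0$; cardinality means that of the vertex set. A morphism $\phi:G\to H$ maps vertices so that $v\xrightarrow{c}v'$ implies $\phi(v)\xrightarrow{c}\phi(v')$. A $D$-valuation is $\mathrm{val}:D^\omega\to X$ with $X$ a complete linear order; $\mathrm{val}_G(v)$ is the supremum of values of colour sequences of infinite paths from $v$ in $G$. Let $\varepsilon\notin C$, $C^\varepsilon=C\sqcup\{\varepsilon\}$; for $w\in(C^\varepsilon)^\omega$, $w_C$ is $w$ with $\varepsilon$'s deleted, and $\mathrm{val}^\varepsilon(w)=\mathrm{val}(w_C)$ if $w_C$ is infinite, $\mathrm{val}^\varepsilon(w)=\inf_{w'\in C^\omega}\mathrm{val}(w_Cw')$ otherwise. A game is $(G,V_{\mathrm{Eve}},v_0,\mathrm{val})$; a strategy is $(S,\pi,s_0)$ with $S$ a graph, $\pi:S\to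 G$ a morphism, $\pi(s_0)=v_0$, and for all $v\notin V_{\mathrm{Eve}}$, $v\xrightarrow{c}v'\in E(G)$, $s\in\pi^{-1}(v)$ there is $s'\in\pi^{-1}(v')$ with $s\xrightarrow{c}s'\in E(S)$; its value is $\mathrm{val}_S(s_0)$ and the value of the game is the infimum over strategies. An $\varepsilon$-game is a $C^\varepsilon$-game with valuation $\mathrm{val}^\varepsilon$; an $\varepsilon$-strategy is a strategy with $V(S)\subseteq V(G)\times M$, $\pi(v,m)=v$, and $(v,m)\xrightarrow{\varepsilon}(v',m')\in E(S)\Rightarrow m=m'$; its memory is $|M|$. $\mathrm{val}$ has $\varepsilon$-memory $\le m$ if in every $\varepsilon$-game the value is attained by an $\varepsilon$-strategy of memory $\le m$. A partially ordered graph $(G,\le)$ is monotone if $u\ge v\xrightarrow{c}v'\ge u'$ implies $u\xrightarrow{c}u'\in E(G)$; well-monotone if moreover $\le$ is well-founded; width $\le m$ means no antichain of cardinality $>m$. An $\varepsilon$-separated monotone graph over a set $M$ is a $C^\varepsilon$-graph $G$ such that $v\le v'\iff v'\xrightarrow{\varepsilon}v\in E(G)$ is a partial order making $G$ monotone, with a partition $(V_j)_{j\in M}$ of $V(G)$ such that $\le$ is total on each part and every $\varepsilon$-edge has both ends in the same part; its breadth is $|M|$ and it is well-monotone if the order is well-founded. For a $D$-valuation $\mathrm{val}$ and cardinal $\kappa$, a $D$-graph $G$ is $(\kappa,\mathrm{val})$-universal if every $D$-tree $T$ of cardinality $<\kappa$ with root $t_0$ admits a morphism $\phi:T\to G$ with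 $\mathrm{val}_G(\phi(t_0))\le\mathrm{val}_T(t_0)$. *)

theory Defs
  imports Main "HOL-Library.Infinite_Set"
begin

definition card_lt :: "'a set \<Rightarrow> 'b set \<Rightarrow> bool" where
  "card_lt A B \<longleftrightarrow> (card_of A, card_of B) \<in> ordLess"

definition is_graph :: "'v set \<Rightarrow> ('v \<times> 'd \<times> 'v) set \<Rightarrow> bool" where
  "is_graph V E \<longleftrightarrow> E \<subseteq> V \<times> UNIV \<times> V \<and> (\<forall>v\<in>V. \<exists>c v'. (v, c, v') \<in> E)"

definition path_words :: "('v \<times> 'd \<times> 'v) set \<Rightarrow> 'v \<Rightarrow> (nat \<Rightarrow> 'd) set" where
  "path_words E v = {w. \<exists>p. p 0 = v \<and> (\<forall>i. (p i, w i, p (Suc i)) \<in> E)}"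

definition gval :: "((nat \<Rightarrow> 'd) \<Rightarrow> 'x::complete_lattice) \<Rightarrow> ('v \<times> 'd \<times> 'v) set \<Rightarrow> 'v \<Rightarrow> 'x" where
  "gval val E v = (SUP w \<in> path_words E v. val w)"

fun fpath :: "('v \<times> 'd \<times> 'v) set \<Rightarrow> 'v \<Rightarrow> ('v \<times> 'd \<times> 'v) list \<Rightarrow> 'v \<Rightarrow> bool" where
  "fpath E u [] v \<longleftrightarrow> u = v"
| "fpath E u (e # es) v \<longleftrightarrow> e \<in> E \<and> fst e = u \<and> fpath E (snd (snd e)) es v"

definition is_tree :: "'v set \<Rightarrow> ('v \<times> 'd \<times> 'v) set \<Rightarrow> 'v \<Rightarrow> bool" where
  "is_tree V E t0 \<longleftrightarrow> is_graph V E \<and> t0 \<in> V \<and> (\<forall>v\<in>V. \<exists>!es. fpath E t0 es v)"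

definition is_morphism :: "'v set \<Rightarrow> ('v \<times> 'd \<times> 'v) set \<Rightarrow> 'w set \<Rightarrow> ('w \<times> 'd \<times> 'w) set
    \<Rightarrow> ('v \<Rightarrow> 'w) \<Rightarrow> bool" where
  "is_morphism V1 E1 V2 E2 \<phi> \<longleftrightarrow>
     (\<forall>v\<in>V1. \<phi> v \<in> V2) \<and> (\<forall>v c v'. (v, c, v') \<in> E1 \<longrightarrow> (\<phi> v, c, \<phi> v') \<in> E2)"

(* (kappa, val)-universality, with kappa = |K|.  Trees range over trees whose vertices
   live in the type of K (every tree of cardinality < |K| is isomorphic to such a tree). *)
definition universal :: "((nat \<Rightarrow> 'd) \<Rightarrow> 'x::complete_lattice) \<Rightarrow> 'k set \<Rightarrow> 'v set
    \<Rightarrow> ('v \<times> 'd \<times> 'v) set \<Rightarrow> bool" where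
  "universal val K V E \<longleftrightarrow>
     (\<forall>(VT::'k set) (ET::('k \<times> 'd \<times> 'k) set) t0.
        is_tree VT ET t0 \<and> card_lt VT K \<longrightarrow>
        (\<exists>\<phi>. is_morphism VT ET V E \<phi> \<and> gval val E (\<phi> t0) \<le> gval val ET t0))"

(* partially ordered graph (V,E,r), r \<subseteq> V \<times> V, (a,b) \<in> r meaning a \<le> b *)
definition mono_graph :: "'v set \<Rightarrow> ('v \<times> 'd \<times> 'v) set \<Rightarrow> ('v \<times> 'v) set \<Rightarrow> bool" where
  "mono_graph V E r \<longleftrightarrow> partial_order_on V r \<and>
     (\<forall>u v v' u' c. (v, u) \<in> r \<and> (v, c, v') \<in> E \<and> (u', v') \<in> r \<longrightarrow> (u, c, u') \<in> E)"

definition well_mono :: "'v set \<Rightarrow> ('v \<times> 'd \<times> 'v) set \<Rightarrow> ('v \<times> 'v) set \<Rightarrow> bool" where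
  "well_mono V E r \<longleftrightarrow> mono_graph V E r \<and> wf (r - Id)"

definition width_le :: "'v set \<Rightarrow> ('v \<times> 'v) set \<Rightarrow> nat \<Rightarrow> bool" where
  "width_le V r m \<longleftrightarrow>
     (\<forall>A \<subseteq> V. (\<forall>a\<in>A. \<forall>b\<in>A. (a, b) \<in> r \<longrightarrow> a = b) \<longrightarrow> finite A \<and> card A \<le> m)"

(* C^eps = 'c option, with None playing the role of epsilon *)
definition eps_order :: "('v \<times> 'c option \<times> 'v) set \<Rightarrow> ('v \<times> 'v) set" where
  "eps_order E = {(v, v'). (v', None, v) \<in> E}"

definition eps_separated :: "'v set \<Rightarrow> ('v \<times> 'c option \<times> 'v) set \<Rightarrow> 'j set \<Rightarrow> ('j \<Rightarrow> 'v set) \<Rightarrow> bool" where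
  "eps_separated V E M P \<longleftrightarrow>
     is_graph V E \<and> mono_graph V E (eps_order E) \<and>
     (\<forall>j\<in>M. P j \<subseteq> V) \<and> (\<Union>j\<in>M. P j) = V \<and>
     (\<forall>i\<in>M. \<forall>j\<in>M. i \<noteq> j \<longrightarrow> P i \<inter> P j = {}) \<and>
     (\<forall>j\<in>M. \<forall>a\<in>P j. \<forall>b\<in>P j. (a, b) \<in> eps_order E \<or> (b, a) \<in> eps_order E) \<and>
     (\<forall>v v'. (v, None, v') \<in> E \<longrightarrow> (\<exists>j\<in>M. v \<in> P j \<and> v' \<in> P j))"

definition prepend :: "'c list \<Rightarrow> (nat \<Rightarrow> 'c) \<Rightarrow> nat \<Rightarrow> 'c" where
  "prepend u w n = (if n < length u then u ! n else w (n - length u))"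

definition eps_val :: "((nat \<Rightarrow> 'c) \<Rightarrow> 'x::complete_lattice) \<Rightarrow> (nat \<Rightarrow> 'c option) \<Rightarrow> 'x" where
  "eps_val val w =
     (if infinite {i. w i \<noteq> None}
      then val (\<lambda>n. the (w (Infinite_Set.enumerate {i. w i \<noteq> None} n)))
      else (let N = (LEAST N. \<forall>i\<ge>N. w i = None);
                u = map (the \<circ> w) (filter (\<lambda>i. w i \<noteq> None) [0..<N])
            in (INF w' \<in> UNIV. val (prepend u w'))))"

definition is_game :: "'v set \<Rightarrow> ('v \<times> 'd \<times> 'v) set \<Rightarrow> 'v set \<Rightarrow> 'v \<Rightarrow> bool" where
  "is_game V E VE v0 \<longleftrightarrow> is_graph V E \<and> VE \<subseteq> V \<and> v0 \<in> V"

definition is_strategy :: "'v set \<Rightarrow> ('v \<times> 'd \<times> 'v) set \<Rightarrow> 'v set \<Rightarrow> 'v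
    \<Rightarrow> 's set \<Rightarrow> ('s \<times> 'd \<times> 's) set \<Rightarrow> ('s \<Rightarrow> 'v) \<Rightarrow> 's \<Rightarrow> bool" where
  "is_strategy V E VE v0 VS ES \<pi> s0 \<longleftrightarrow>
     is_graph VS ES \<and> is_morphism VS ES V E \<pi> \<and> s0 \<in> VS \<and> \<pi> s0 = v0 \<and>
     (\<forall>v \<in> V - VE. \<forall>c v'. (v, c, v') \<in> E \<longrightarrow>
        (\<forall>s\<in>VS. \<pi> s = v \<longrightarrow> (\<exists>s'\<in>VS. \<pi> s' = v' \<and> (s, c, s') \<in> ES)))"

definition is_eps_strategy :: "'v set \<Rightarrow> ('v \<times> 'c option \<times> 'v) set \<Rightarrow> 'v set \<Rightarrow> 'v \<Rightarrow> 'm set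
    \<Rightarrow> ('v \<times> 'm) set \<Rightarrow> (('v \<times> 'm) \<times> 'c option \<times> ('v \<times> 'm)) set \<Rightarrow> ('v \<times> 'm) \<Rightarrow> bool" where
  "is_eps_strategy V E VE v0 M VS ES s0 \<longleftrightarrow>
     VS \<subseteq> V \<times> M \<and> is_strategy V E VE v0 VS ES fst s0 \<and>
     (\<forall>v mm v' mm'. ((v, mm), None, (v', mm')) \<in> ES \<longrightarrow> mm = mm')"

definition game_value :: "((nat \<Rightarrow> 'd) \<Rightarrow> 'x::complete_lattice) \<Rightarrow> 'v set \<Rightarrow> ('v \<times> 'd \<times> 'v) set
    \<Rightarrow> 'v set \<Rightarrow> 'v \<Rightarrow> 's itself \<Rightarrow> 'x" where
  "game_value val V E VE v0 _ =
     (INF S \<in> {(VS :: 's set, ES, \<pi>, s0). is_strategy V E VE v0 VS ES \<pi> s0}.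
        (case S of (VS, ES, \<pi>, s0) \<Rightarrow> gval val ES s0))"

(* eps-memory \<le> m, for eps-games with vertices in 'v, strategies compared against all
   strategies living in type 's (memory sets WLOG subsets of nat).  The eps-strategy is
   itself a strategy, so "\<le> game value" means it attains the value. *)
definition eps_memory_le :: "((nat \<Rightarrow> 'c) \<Rightarrow> 'x::complete_lattice) \<Rightarrow> nat \<Rightarrow> 'v itself \<Rightarrow> 's itself \<Rightarrow> bool" where
  "eps_memory_le val m _ _ \<longleftrightarrow>
     (\<forall>(V :: 'v set) (E :: ('v \<times> 'c option \<times> 'v) set) VE v0. is_game V E VE v0 \<longrightarrow>
        (\<exists>(M :: nat set) VS ES s0. finite M \<and> card M \<le> m \<and>
           is_eps_strategy V E VE v0 M VS ES s0 \<and>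
           gval (eps_val val) ES s0 \<le> game_value (eps_val val) V E VE v0 TYPE('s)))"

end

theory Submission
  imports Defs "HOL-Analysis.Function_Topology"
begin

text \<open>By Dilworth's theorem, extended to infinite orders by compactness, a well-monotone universal
  graph of width m is covered by m chains; turning the order inside each chain into epsilon-edges
  gives an epsilon-separated well-monotone graph of breadth m. It is universal for eps_val: an
  epsilon-tree contracts to a coloured tree of no larger value (an epsilon-path followed by a
  c-edge becomes one c-edge, an infinite epsilon-path becomes a tail realising the infimum in
  eps_val), a morphism of the contraction into the universal graph lifts back to the epsilon-tree,
  and since epsilon-edges only go down, monotonicity absorbs them along every path.
  For the memory bound, unfold an optimal strategy of an epsilon-game into a tree and map it into
  the universal epsilon-separated graph; it suffices to remember the part containing the current
  image, playing from (v, j) like the least image in part j of a strategy vertex over v.\<close>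

section \<open>Chain covers of partial orders of finite width\<close>

definition antichain :: "('a \<times> 'a) set \<Rightarrow> 'a set \<Rightarrow> bool" where
  "antichain r A \<longleftrightarrow> (\<forall>a\<in>A. \<forall>b\<in>A. (a, b) \<in> r \<longrightarrow> a = b)"

definition chain_cover :: "('a \<times> 'a) set \<Rightarrow> 'a set \<Rightarrow> nat \<Rightarrow> ('a \<Rightarrow> nat) \<Rightarrow> bool" where
  "chain_cover r F k f \<longleftrightarrow>
     (\<forall>x\<in>F. f x < k) \<and> (\<forall>x\<in>F. \<forall>y\<in>F. f x = f y \<longrightarrow> (x, y) \<in> r \<or> (y, x) \<in> r)"

lemma antichain_converse [simp]: "antichain (r\<inverse>) A = antichain r A"
  unfolding antichain_def by auto

lemma chain_cover_converse [simp]: "chain_cover (r\<inverse>) F k f = chain_cover r F k f"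
  unfolding chain_cover_def by auto

lemma partial_order_finite_minimal:
  assumes "partial_order_on V r" "finite F" "F \<noteq> {}"
  obtains x where "x \<in> F" "\<And>z. z \<in> F \<Longrightarrow> (z, x) \<in> r \<Longrightarrow> z = x"
proof -
  have "acyclic ((r - Id) \<inter> F \<times> F)"
    by (rule acyclic_subset[OF partial_order_on_acyclic[OF assms(1)]]) auto
  then have "wf ((r - Id) \<inter> F \<times> F)"
    using assms(2) by (intro finite_acyclic_wf) auto
  then obtain x where "x \<in> F" "\<And>z. (z, x) \<in> (r - Id) \<inter> F \<times> F \<Longrightarrow> z \<notin> F"
    using wfE_min assms(3) by (metis ex_in_conv)
  then show ?thesis using that by blast
qed

lemma partial_order_finite_min_max:
  assumes po: "partial_order_on V r" and "finite F" "F \<subseteq> V" "F \<noteq> {}"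
  obtains x y where "x \<in> F" "y \<in> F" "(x, y) \<in> r"
    "\<And>z. z \<in> F \<Longrightarrow> (z, x) \<in> r \<Longrightarrow> z = x" "\<And>z. z \<in> F \<Longrightarrow> (y, z) \<in> r \<Longrightarrow> z = y"
proof -
  obtain x where x: "x \<in> F" "\<And>z. z \<in> F \<Longrightarrow> (z, x) \<in> r \<Longrightarrow> z = x"
    using partial_order_finite_minimal[OF po assms(2,4)] by blast
  let ?U = "{z\<in>F. (x, z) \<in> r}"
  have "x \<in> ?U" using x(1) refl_onD[OF partial_order_onD(1)[OF po]] assms(3) by blast
  then obtain y where "y \<in> ?U" and y: "\<And>z. z \<in> ?U \<Longrightarrow> (z, y) \<in> r\<inverse> \<Longrightarrow> z = y"
    using partial_order_finite_minimal[of V "r\<inverse>" ?U] po assms(2) by auto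
  then show ?thesis
    using that[OF x(1) _ _ x(2)] transD[OF partial_order_onD(2)[OF po]] by blast
qed

lemma chain_cover_add_chain:
  assumes "chain_cover r (F - C) k g" and "\<forall>x\<in>C. \<forall>y\<in>C. (x, y) \<in> r \<or> (y, x) \<in> r"
  shows "chain_cover r F (Suc k) (\<lambda>z. if z \<in> C then k else g z)"
proof -
  have bound: "g z < k" if "z \<in> F" "z \<notin> C" for z
    using assms(1) that unfolding chain_cover_def by blast
  show ?thesis
    unfolding chain_cover_def
  proof (intro conjI ballI impI)
    fix a b assume ab: "a \<in> F" "b \<in> F" "(if a \<in> C then k else g a) = (if b \<in> C then k else g b)"
    show "(a, b) \<in> r \<or> (b, a) \<in> r"
    proof (cases "a \<in> C \<or> b \<in> C")
      case True
      then have "a \<in> C" "b \<in> C" using ab bound[of a] bound[of b] by (auto split: if_splits)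
      then show ?thesis using assms(2) by blast
    next
      case False
      then show ?thesis using assms(1) ab unfolding chain_cover_def by auto
    qed
  next
    fix z assume "z \<in> F"
    then show "(if z \<in> C then k else g z) < Suc k" using bound[of z] by (simp add: less_SucI)
  qed
qed

text \<open>If a chain cover has exactly card A chains, every chain contains an element of the antichain
  A, so an element below A lies below the element of A in its own chain.\<close>

lemma chain_cover_anchor:
  assumes "trans r" and cover: "chain_cover r G k g"
    and A: "finite A" "A \<subseteq> G" "antichain r A" "card A = k"
    and below: "\<forall>z\<in>G. \<exists>a\<in>A. (z, a) \<in> r"
  obtains \<alpha> where "\<And>z. z \<in> G \<Longrightarrow> \<alpha> z \<in> A \<and> g (\<alpha> z) = g z \<and> (z, \<alpha> z) \<in> r"
proof -
  have "inj_on g A"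
    using cover A unfolding chain_cover_def antichain_def inj_on_def by blast
  then have "card (g ` A) = card {..<k}"
    using A by (simp add: card_image)
  moreover have "g ` A \<subseteq> {..<k}"
    using cover A unfolding chain_cover_def by auto
  ultimately have onto: "g ` A = {..<k}"
    by (intro card_subset_eq) auto
  have "\<exists>b. b \<in> A \<and> g b = g z \<and> (z, b) \<in> r" if z: "z \<in> G" for z
  proof -
    obtain a where a: "a \<in> A" "(z, a) \<in> r" using below z by blast
    obtain b where b: "b \<in> A" "g b = g z"
      using onto cover z unfolding chain_cover_def by (metis imageE lessThan_iff)
    then have "(z, b) \<in> r \<or> (b, z) \<in> r"
      using cover A(2) z unfolding chain_cover_def by blast
    then have "(z, b) \<in> r"
      using a A(3) b(1) transD[OF assms(1)] unfolding antichain_def by metis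
    then show ?thesis using b by blast
  qed
  then have "\<forall>z\<in>G. \<exists>b. b \<in> A \<and> g b = g z \<and> (z, b) \<in> r" by blast
  then show ?thesis using that by metis
qed

lemma maximum_antichain_comparable:
  assumes po: "partial_order_on V r" and "F \<subseteq> V"
    and A: "finite A" "A \<subseteq> F" "antichain r A" "card A = k"
    and maximum: "\<forall>B \<subseteq> F. antichain r B \<longrightarrow> card B \<le> k" and "z \<in> F"
  shows "(\<exists>a\<in>A. (z, a) \<in> r) \<or> (\<exists>a\<in>A. (a, z) \<in> r)"
proof (rule ccontr)
  assume incomparable: "\<not> ?thesis"
  then have "antichain r (insert z A)" using A(3) unfolding antichain_def by blast
  moreover have "z \<notin> A"
    using incomparable refl_onD[OF partial_order_onD(1)[OF po]] \<open>z \<in> F\<close> \<open>F \<subseteq> V\<close> by blast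
  ultimately have "card (insert z A) \<le> k" using maximum A(2) \<open>z \<in> F\<close> by blast
  then show False using \<open>z \<notin> A\<close> A(1,4) by simp
qed

lemma chain_cover_through_anchors:
  assumes "trans r" "antichain r A" "A \<subseteq> Fm"
    and gm: "chain_cover r Fm k gm" and gp: "chain_cover r Fp k gp"
    and anchor: "\<And>z. z \<in> F \<Longrightarrow> anchor z \<in> A \<and>
      (z \<in> Fm \<and> gm z = gm (anchor z) \<and> (z, anchor z) \<in> r \<or>
       z \<in> Fp \<and> gp z = gp (anchor z) \<and> (anchor z, z) \<in> r)"
  shows "chain_cover r F k (gm \<circ> anchor)"
  unfolding chain_cover_def
proof (intro conjI ballI impI)
  fix x assume "x \<in> F"
  then show "(gm \<circ> anchor) x < k" using gm anchor \<open>A \<subseteq> Fm\<close> unfolding chain_cover_def by auto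
next
  fix x y assume xy: "x \<in> F" "y \<in> F" "(gm \<circ> anchor) x = (gm \<circ> anchor) y"
  then have "(anchor x, anchor y) \<in> r \<or> (anchor y, anchor x) \<in> r"
    using gm anchor \<open>A \<subseteq> Fm\<close> unfolding chain_cover_def comp_def by (meson subsetD)
  then have same: "anchor x = anchor y"
    using assms(2) anchor xy unfolding antichain_def by metis
  from anchor[OF xy(1)] anchor[OF xy(2)] show "(x, y) \<in> r \<or> (y, x) \<in> r"
  proof (elim disjE conjE)
    assume "x \<in> Fm" "y \<in> Fm" "gm x = gm (anchor x)" "gm y = gm (anchor y)"
    moreover from this have "gm x = gm y" using same by simp
    ultimately show ?thesis using gm unfolding chain_cover_def by blast
  next
    assume "x \<in> Fp" "y \<in> Fp" "gp x = gp (anchor x)" "gp y = gp (anchor y)"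
    moreover from this have "gp x = gp y" using same by simp
    ultimately show ?thesis using gp unfolding chain_cover_def by blast
  next
    assume "(x, anchor x) \<in> r" "(anchor y, y) \<in> r"
    then show ?thesis using same transD[OF assms(1)] by metis
  next
    assume "(anchor x, x) \<in> r" "(y, anchor y) \<in> r"
    then show ?thesis using same transD[OF assms(1)] by metis
  qed
qed

text \<open>Perles' proof of Dilworth's theorem: a maximum antichain A splits F into the elements
  below and above it; chain covers of the two halves are glued along the elements of A.\<close>

lemma chain_cover_glue:
  assumes po: "partial_order_on V r" and "F \<subseteq> V"
    and A: "finite A" "A \<subseteq> F" "antichain r A" "card A = k"
    and maximum: "\<forall>B \<subseteq> F. antichain r B \<longrightarrow> card B \<le> k"
    and gm: "chain_cover r {z\<in>F. \<exists>a\<in>A. (z, a) \<in> r} k gm"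
    and gp: "chain_cover r {z\<in>F. \<exists>a\<in>A. (a, z) \<in> r} k gp"
  shows "\<exists>f. chain_cover r F k f"
proof -
  let ?Fm = "{z\<in>F. \<exists>a\<in>A. (z, a) \<in> r}" and ?Fp = "{z\<in>F. \<exists>a\<in>A. (a, z) \<in> r}"
  have trans: "trans r" "trans (r\<inverse>)" using partial_order_onD(2)[OF po] by simp_all
  have "A \<subseteq> ?Fm" "A \<subseteq> ?Fp"
    using A refl_onD[OF partial_order_onD(1)[OF po]] \<open>F \<subseteq> V\<close> by auto
  obtain \<alpha> where \<alpha>: "\<And>z. z \<in> ?Fm \<Longrightarrow> \<alpha> z \<in> A \<and> gm (\<alpha> z) = gm z \<and> (z, \<alpha> z) \<in> r"
    using chain_cover_anchor[OF trans(1) gm A(1) \<open>A \<subseteq> ?Fm\<close> A(3,4)] by blast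
  obtain \<beta> where "\<And>z. z \<in> ?Fp \<Longrightarrow> \<beta> z \<in> A \<and> gp (\<beta> z) = gp z \<and> (z, \<beta> z) \<in> r\<inverse>"
    using chain_cover_anchor[OF trans(2) _ A(1) \<open>A \<subseteq> ?Fp\<close> _ A(4)] gp A(3) by auto
  then have \<beta>: "\<And>z. z \<in> ?Fp \<Longrightarrow> \<beta> z \<in> A \<and> gp (\<beta> z) = gp z \<and> (\<beta> z, z) \<in> r" by simp
  define anchor where "anchor z = (if z \<in> ?Fm then \<alpha> z else \<beta> z)" for z
  have "anchor z \<in> A \<and> (z \<in> ?Fm \<and> gm z = gm (anchor z) \<and> (z, anchor z) \<in> r \<or>
      z \<in> ?Fp \<and> gp z = gp (anchor z) \<and> (anchor z, z) \<in> r)" if "z \<in> F" for z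
  proof (cases "z \<in> ?Fm")
    case True
    then show ?thesis using \<alpha>[OF True] unfolding anchor_def by simp
  next
    case False
    then have "z \<in> ?Fp"
      using maximum_antichain_comparable[OF po \<open>F \<subseteq> V\<close> A maximum that] that by blast
    then show ?thesis using False \<beta>[OF \<open>z \<in> ?Fp\<close>] unfolding anchor_def by simp
  qed
  then have "chain_cover r F k (gm \<circ> anchor)"
    by (rule chain_cover_through_anchors[OF trans(1) A(3) \<open>A \<subseteq> ?Fm\<close> gm gp])
  then show ?thesis by blast
qed

lemma finite_chain_cover:
  assumes po: "partial_order_on V r" and "finite F" "F \<subseteq> V"
    and "\<forall>A \<subseteq> F. antichain r A \<longrightarrow> card A \<le> k"
  shows "\<exists>f. chain_cover r F k f"
  using assms(2-)
proof (induction "card F" arbitrary: F k rule: less_induct)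
  case less
  have refl: "(z, z) \<in> r" if "z \<in> F" for z
    using refl_onD[OF partial_order_onD(1)[OF po]] that less.prems(2) by blast
  show ?case
  proof (cases "F = {}")
    case True
    then show ?thesis by (intro exI[of _ "\<lambda>_. 0"]) (simp add: chain_cover_def)
  next
    case False
    obtain x y where x: "x \<in> F" "\<And>z. z \<in> F \<Longrightarrow> (z, x) \<in> r \<Longrightarrow> z = x"
      and y: "y \<in> F" "(x, y) \<in> r" "\<And>z. z \<in> F \<Longrightarrow> (y, z) \<in> r \<Longrightarrow> z = y"
      using partial_order_finite_min_max[OF po less.prems(1,2) False] by metis
    have "card {x} \<le> k" using less.prems(3) x(1) unfolding antichain_def by blast
    show ?thesis
    proof (cases "\<forall>A \<subseteq> F - {x, y}. antichain r A \<longrightarrow> card A \<le> k - 1")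
      case True
      have "card (F - {x, y}) < card F"
        using x(1) less.prems(1) by (intro psubset_card_mono) auto
      then obtain g where "chain_cover r (F - {x, y}) (k - 1) g"
        using less.hyps[OF _ _ _ True] less.prems(1,2) by blast
      moreover have "\<forall>a\<in>{x, y}. \<forall>b\<in>{x, y}. (a, b) \<in> r \<or> (b, a) \<in> r" using refl x(1) y by auto
      ultimately have "chain_cover r F (Suc (k - 1)) (\<lambda>z. if z \<in> {x, y} then k - 1 else g z)"
        by (rule chain_cover_add_chain)
      moreover have "Suc (k - 1) = k" using \<open>card {x} \<le> k\<close> by simp
      ultimately show ?thesis by auto
    next
      case False
      then obtain A where A: "A \<subseteq> F - {x, y}" "antichain r A" "\<not> card A \<le> k - 1" by blast
      have "finite A" using A(1) less.prems(1) finite_subset by blast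
      have "card A \<le> k" using less.prems(3) A(1,2) by blast
      then have "card A = k" using A(3) by linarith
      have IH: "\<exists>g. chain_cover r G k g" if "G \<subseteq> F" "z \<in> F" "z \<notin> G" for G z
      proof (rule less.hyps)
        show "card G < card F" using that less.prems(1) by (intro psubset_card_mono) auto
      qed (use that less.prems in \<open>auto intro: finite_subset\<close>)
      have "y \<notin> {z\<in>F. \<exists>a\<in>A. (z, a) \<in> r}" "x \<notin> {z\<in>F. \<exists>a\<in>A. (a, z) \<in> r}"
        using x(2) y(3) A(1) by fastforce+
      then show ?thesis
        using chain_cover_glue[OF po less.prems(2) \<open>finite A\<close> _ A(2) \<open>card A = k\<close> less.prems(3)]
          IH[of "{z\<in>F. \<exists>a\<in>A. (z, a) \<in> r}" y] IH[of "{z\<in>F. \<exists>a\<in>A. (a, z) \<in> r}" x] A(1) x(1) y(1)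
        by blast
    qed
  qed
qed

lemma closedin_chain_covers:
  assumes "F \<subseteq> V"
  shows "closedin (product_topology (\<lambda>_. discrete_topology {..<m}) V)
    {f \<in> (\<Pi>\<^sub>E x\<in>V. {..<m}). chain_cover r F m f}"
proof -
  define X where "X = product_topology (\<lambda>_. discrete_topology {..<m}) V"
  have topspace: "topspace X = (\<Pi>\<^sub>E x\<in>V. {..<m})"
    by (simp add: X_def)
  have open_eq: "openin X {f \<in> topspace X. f x = f y}" if "x \<in> V" "y \<in> V" for x y
  proof -
    have proj: "continuous_map X (discrete_topology {..<m}) (\<lambda>f. f z)" if "z \<in> V" for z
      unfolding X_def using that by (rule continuous_map_product_projection)
    have "{f \<in> topspace X. f x = f y} =
        (\<Union>i<m. {f \<in> topspace X. f x \<in> {i}} \<inter> {f \<in> topspace X. f y \<in> {i}})"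
      using that by (auto simp: topspace PiE_iff)
    moreover have "openin X ({f \<in> topspace X. f x \<in> {i}} \<inter> {f \<in> topspace X. f y \<in> {i}})"
      if "i < m" for i
      using that openin_continuous_map_preimage[OF proj[OF \<open>x \<in> V\<close>], of "{i}"]
        openin_continuous_map_preimage[OF proj[OF \<open>y \<in> V\<close>], of "{i}"]
      by (intro openin_Int) auto
    ultimately show ?thesis by auto
  qed
  have "topspace X - {f \<in> topspace X. chain_cover r F m f} =
      (\<Union>(x, y) \<in> {(x, y). x \<in> F \<and> y \<in> F \<and> (x, y) \<notin> r \<and> (y, x) \<notin> r}.
        {f \<in> topspace X. f x = f y})"
    using assms unfolding chain_cover_def topspace by (fastforce simp: PiE_iff)
  moreover have "openin X \<dots>"
    using open_eq assms by (intro openin_Union) auto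
  ultimately show ?thesis unfolding closedin_def X_def[symmetric] topspace[symmetric] by auto
qed

text \<open>Compactness: the chain covers of the finite subsets of V form closed sets with the finite
  intersection property in the compact product space of all maps V \<rightarrow> {..<m}.\<close>

lemma chain_cover_of_width:
  assumes po: "partial_order_on V r" and width: "width_le V r m"
  shows "\<exists>f. chain_cover r V m f"
proof -
  define X where "X = product_topology (\<lambda>_. discrete_topology {..<m}) V"
  have compact: "compact_space X"
    unfolding X_def compact_space_product_topology by (simp add: compact_space_discrete_topology)
  define CF where "CF F = {f \<in> (\<Pi>\<^sub>E x\<in>V. {..<m}). chain_cover r F m f}" for F
  have nonempty: "CF F \<noteq> {}" if F: "finite F" "F \<subseteq> V" for F
  proof -
    have antichain: "finite A \<and> card A \<le> m" if "A \<subseteq> V" "antichain r A" for A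
      using width that unfolding width_le_def antichain_def by blast
    then obtain f where f: "chain_cover r F m f"
      using finite_chain_cover[OF po F] F(2) by (meson subset_trans)
    show ?thesis
    proof (cases "V = {}")
      case False
      then obtain v where "v \<in> V" by blast
      then have "card {v} \<le> m"
        using antichain[of "{v}"] unfolding antichain_def by simp
      then have "restrict (\<lambda>x. if x \<in> F then f x else 0) V \<in> CF F"
        using f F unfolding CF_def chain_cover_def by auto
      then show ?thesis by blast
    qed (use F in \<open>auto simp: CF_def chain_cover_def\<close>)
  qed
  have "\<Inter> (CF ` {F. finite F \<and> F \<subseteq> V}) \<noteq> {}"
  proof (rule compact_space_fip[THEN iffD1, OF compact, rule_format], intro conjI allI impI)
    show "\<forall>C \<in> CF ` {F. finite F \<and> F \<subseteq> V}. closedin X C"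
      unfolding X_def CF_def using closedin_chain_covers by blast
  next
    fix \<F> assume "finite \<F> \<and> \<F> \<subseteq> CF ` {F. finite F \<and> F \<subseteq> V}"
    then obtain G where G: "G \<subseteq> {F. finite F \<and> F \<subseteq> V}" "finite G" "\<F> = CF ` G"
      by (meson finite_subset_image)
    then have "CF (\<Union>G) \<subseteq> \<Inter>\<F>" unfolding CF_def chain_cover_def by blast
    moreover have "CF (\<Union>G) \<noteq> {}" using nonempty G by auto
    ultimately show "\<Inter>\<F> \<noteq> {}" by blast
  qed
  then obtain f where "f \<in> CF F" if "finite F" "F \<subseteq> V" for F by blast
  then have "chain_cover r F m f" if "finite F" "F \<subseteq> V" for F
    using that unfolding CF_def by blast
  then show ?thesis
    unfolding chain_cover_def by (metis empty_subsetI finite.intros insert_subset insertCI)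
qed

section \<open>Paths, values and morphisms\<close>

lemma is_graph_edgeD:
  assumes "is_graph V E" "(a, c, b) \<in> E"
  shows "a \<in> V" "b \<in> V"
  using assms unfolding is_graph_def by blast+

lemma is_graph_succE:
  assumes "is_graph V E" "a \<in> V"
  obtains c b where "(a, c, b) \<in> E"
  using assms unfolding is_graph_def by blast

lemma fpath_append: "fpath E u (es @ es') w \<longleftrightarrow> (\<exists>v. fpath E u es v \<and> fpath E v es' w)"
  by (induction es arbitrary: u) auto

lemma fpath_snoc: "fpath E u (es @ [e]) w \<longleftrightarrow> fpath E u es (fst e) \<and> e \<in> E \<and> snd (snd e) = w"
  by (auto simp: fpath_append)

lemma fpath_nth_edge: "fpath E u es v \<Longrightarrow> i < length es \<Longrightarrow> es ! i \<in> E"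
  by (induction es arbitrary: u i) (auto simp: nth_Cons split: nat.splits)

lemma fpath_nth_source:
  "fpath E u es v \<Longrightarrow> i < length es \<Longrightarrow> fst (es ! i) = (if i = 0 then u else snd (snd (es ! (i - 1))))"
proof (induction es arbitrary: u i)
  case (Cons e es)
  then show ?case by (cases i) (auto simp: nth_Cons split: nat.splits)
qed simp

lemma fpath_last_target: "fpath E u es v \<Longrightarrow> es \<noteq> [] \<Longrightarrow> snd (snd (es ! (length es - 1))) = v"
proof (induction es arbitrary: u)
  case (Cons e es)
  then show ?case by (cases es) (auto simp: nth_Cons split: nat.splits)
qed simp

lemma fpath_target_in:
  assumes "is_graph V E" "u \<in> V" "fpath E u es v"
  shows "v \<in> V"
  using assms(2,3)
proof (induction es arbitrary: u)
  case (Cons e es)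
  then show ?case
    using is_graph_edgeD(2)[OF assms(1), of "fst e" "fst (snd e)" "snd (snd e)"] by auto
qed simp

lemma path_wordsI: "p 0 = v \<Longrightarrow> (\<And>i. (p i, w i, p (Suc i)) \<in> E) \<Longrightarrow> w \<in> path_words E v"
  unfolding path_words_def by blast

lemma gval_upper: "w \<in> path_words E v \<Longrightarrow> val w \<le> gval val E v"
  unfolding gval_def by (rule SUP_upper)

lemma gval_least: "(\<And>w. w \<in> path_words E v \<Longrightarrow> val w \<le> x) \<Longrightarrow> gval val E v \<le> x"
  unfolding gval_def by (rule SUP_least)

lemma gval_mono: "path_words E v \<subseteq> path_words E' v' \<Longrightarrow> gval val E v \<le> gval val E' v'"
  unfolding gval_def by (rule SUP_subset_mono) auto

lemma path_words_morphism:
  assumes "is_morphism V E V' E' \<phi>"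
  shows "path_words E v \<subseteq> path_words E' (\<phi> v)"
proof
  fix w assume "w \<in> path_words E v"
  then obtain p where "p 0 = v" "\<forall>i. (p i, w i, p (Suc i)) \<in> E" unfolding path_words_def by blast
  then show "w \<in> path_words E' (\<phi> v)"
    using assms unfolding is_morphism_def by (intro path_wordsI[of "\<phi> \<circ> p"]) auto
qed

lemma gval_morphism_le: "is_morphism V E V' E' \<phi> \<Longrightarrow> gval val E v \<le> gval val E' (\<phi> v)"
  by (rule gval_mono) (rule path_words_morphism)

lemma is_morphism_comp:
  "is_morphism V1 E1 V2 E2 f \<Longrightarrow> is_morphism V2 E2 V3 E3 g \<Longrightarrow> is_morphism V1 E1 V3 E3 (g \<circ> f)"
  unfolding is_morphism_def by auto

lemma is_graph_infinite_path:
  assumes "is_graph V E" "v \<in> V"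
  obtains p w where "p 0 = v" "\<And>i. (p i, w i, p (Suc i)) \<in> E"
proof -
  have "\<exists>cy. (x, fst cy, snd cy) \<in> E \<and> snd cy \<in> V" if "x \<in> V" for x
    using is_graph_succE[OF assms(1) that] is_graph_edgeD(2)[OF assms(1)] by fastforce
  then obtain step where step: "\<And>x. x \<in> V \<Longrightarrow> (x, fst (step x), snd (step x)) \<in> E \<and> snd (step x) \<in> V"
    by metis
  define p where "p = rec_nat v (\<lambda>_ x. snd (step x))"
  have p_simps: "p 0 = v" "p (Suc i) = snd (step (p i))" for i
    unfolding p_def by simp_all
  have "p i \<in> V" for i
    by (induction i) (use assms(2) step in \<open>auto simp: p_simps\<close>)
  then show ?thesis
    using that[of p "\<lambda>i. fst (step (p i))"] step by (simp add: p_simps)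
qed

definition prepend_path :: "('v \<times> 'd \<times> 'v) list \<Rightarrow> (nat \<Rightarrow> 'v) \<Rightarrow> nat \<Rightarrow> 'v" where
  "prepend_path es q i = (if i < length es then fst (es ! i) else q (i - length es))"

lemma path_words_prepend:
  assumes es: "fpath E u es v" and q: "q 0 = v" "\<And>i. (q i, w i, q (Suc i)) \<in> E"
  shows "prepend (map (fst \<circ> snd) es) w \<in> path_words E u"
proof (rule path_wordsI[where p = "prepend_path es q"])
  show "prepend_path es q 0 = u"
    using q(1) es fpath_nth_source[OF es, of 0] by (cases es) (auto simp: prepend_path_def)
  fix i
  show "(prepend_path es q i, prepend (map (fst \<circ> snd) es) w i, prepend_path es q (Suc i)) \<in> E"
  proof (cases "i < length es")
    case True
    have "prepend_path es q (Suc i) = snd (snd (es ! i))"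
    proof (cases "Suc i < length es")
      case False
      then have "i = length es - 1" using True by simp
      moreover have "es \<noteq> []" using True by auto
      ultimately show ?thesis
        using fpath_last_target[OF es] True q(1) by (auto simp: prepend_path_def)
    qed (simp add: prepend_path_def fpath_nth_source[OF es])
    then show ?thesis
      using fpath_nth_edge[OF es True] True
      by (cases "es ! i") (simp add: prepend_path_def prepend_def)
  next
    case False
    then have "Suc i - length es = Suc (i - length es)" by simp
    then show ?thesis
      using False q(2)[of "i - length es"] by (simp add: prepend_path_def prepend_def)
  qed
qed

lemma path_words_mono_graph:
  assumes "is_graph V E" "mono_graph V E r" "(a, b) \<in> r"
  shows "path_words E a \<subseteq> path_words E b"
proof
  fix w assume "w \<in> path_words E a"
  then obtain p where p: "p 0 = a" "\<And>i. (p i, w i, p (Suc i)) \<in> E"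
    unfolding path_words_def by blast
  have "p 1 \<in> V" using is_graph_edgeD(2)[OF assms(1) p(2)[of 0]] by simp
  then have "(p 1, p 1) \<in> r"
    using assms(2) unfolding mono_graph_def partial_order_on_def preorder_on_def refl_on_def
    by blast
  then have "(b, w 0, p 1) \<in> E"
    using assms(2,3) p unfolding mono_graph_def by (metis One_nat_def)
  then show "w \<in> path_words E b"
    using p by (intro path_wordsI[of "p(0 := b)"]) (auto simp: nat.split split: if_splits)
qed

section \<open>Trees and unfoldings\<close>

lemma is_tree_fpath_unique:
  assumes "is_tree VT ET t0" "fpath ET t0 es v" "fpath ET t0 es' v"
  shows "es = es'"
  using assms fpath_target_in[of VT ET t0 es v] unfolding is_tree_def by metis

lemma is_tree_in_edge_unique:
  assumes tree: "is_tree VT ET t0" and "(s, x, t) \<in> ET" "(s', x', t) \<in> ET"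
  shows "s = s' \<and> x = x'"
proof -
  have "s \<in> VT" "s' \<in> VT"
    using tree assms(2,3) is_graph_edgeD(1) unfolding is_tree_def by metis+
  then obtain es es' where "fpath ET t0 es s" "fpath ET t0 es' s'"
    using tree unfolding is_tree_def by metis
  then have "fpath ET t0 (es @ [(s, x, t)]) t" "fpath ET t0 (es' @ [(s', x', t)]) t"
    using assms(2,3) by (simp_all add: fpath_snoc)
  then show ?thesis using is_tree_fpath_unique[OF tree] by blast
qed

definition path_prefix :: "(nat \<Rightarrow> 'v) \<Rightarrow> (nat \<Rightarrow> 'd) \<Rightarrow> nat \<Rightarrow> ('v \<times> 'd \<times> 'v) list" where
  "path_prefix p w n = map (\<lambda>k. (p k, w k, p (Suc k))) [0..<n]"

lemma fpath_path_prefix: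
  assumes "\<And>i. (p i, w i, p (Suc i)) \<in> E"
  shows "fpath E (p 0) (path_prefix p w n) (p n)"
  by (induction n) (simp_all add: path_prefix_def fpath_snoc assms)

lemma is_tree_infinite:
  assumes tree: "is_tree VT ET t0"
  shows "infinite VT"
proof
  assume "finite VT"
  have graph: "is_graph VT ET" and "t0 \<in> VT"
    using tree unfolding is_tree_def by auto
  then obtain p w where p: "p 0 = t0" "\<And>i. (p i, w i, p (Suc i)) \<in> ET"
    using is_graph_infinite_path by metis
  have "p i \<in> VT" for i
    using p \<open>t0 \<in> VT\<close> is_graph_edgeD(2)[OF graph] by (cases i) auto
  then have "\<not> inj p"
    using \<open>finite VT\<close> finite_imageD finite_subset infinite_UNIV_nat by (metis image_subsetI)
  then obtain i j where "i \<noteq> j" "p i = p j" unfolding inj_def by blast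
  moreover have "fpath ET t0 (path_prefix p w i) (p i)" "fpath ET t0 (path_prefix p w j) (p j)"
    using fpath_path_prefix[of p w, OF p(2)] p(1) by metis+
  ultimately have "path_prefix p w i = path_prefix p w j"
    using is_tree_fpath_unique[OF tree] by metis
  then show False using \<open>i \<noteq> j\<close> by (metis length_map length_upt minus_nat.diff_0 path_prefix_def)
qed

text \<open>The unfolding of E from g has as vertices the walks from g, each recorded as the list of
  (vertex, colour) pairs of the edges it uses.\<close>

fun walk :: "('a \<times> 'd \<times> 'a) set \<Rightarrow> 'a \<Rightarrow> ('a \<times> 'd) list \<Rightarrow> bool" where
  "walk E u [] = True"
| "walk E u (x # xs) \<longleftrightarrow> (u, snd x, fst x) \<in> E \<and> walk E (fst x) xs"

definition walk_end :: "'a \<Rightarrow> ('a \<times> 'd) list \<Rightarrow> 'a" where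
  "walk_end g xs = (if xs = [] then g else fst (last xs))"

definition unfold_V :: "('a \<times> 'd \<times> 'a) set \<Rightarrow> 'a \<Rightarrow> ('a \<times> 'd) list set" where
  "unfold_V E g = {xs. walk E g xs}"

definition unfold_E :: "('a \<times> 'd \<times> 'a) set \<Rightarrow> 'a \<Rightarrow> (('a \<times> 'd) list \<times> 'd \<times> ('a \<times> 'd) list) set" where
  "unfold_E E g = {(xs, c, xs @ [(a, c)]) | xs c a. walk E g xs \<and> (walk_end g xs, c, a) \<in> E}"

lemma walk_end_Nil [simp]: "walk_end g [] = g"
  by (simp add: walk_end_def)

lemma walk_end_snoc [simp]: "walk_end g (xs @ [x]) = fst x"
  by (simp add: walk_end_def)

lemma walk_snoc: "walk E u (xs @ [x]) \<longleftrightarrow> walk E u xs \<and> (walk_end u xs, snd x, fst x) \<in> E"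
  by (induction xs arbitrary: u) (auto simp: walk_end_def)

lemma walk_set: "walk E u xs \<Longrightarrow> set xs \<subseteq> {(b, c). \<exists>a. (a, c, b) \<in> E}"
  by (induction xs arbitrary: u) auto

lemma walk_end_in:
  assumes "is_graph V E" "u \<in> V" "walk E u xs"
  shows "walk_end u xs \<in> V"
  using assms(3)
proof (induction xs rule: rev_induct)
  case (snoc x xs)
  then show ?case by (auto simp: walk_snoc dest: is_graph_edgeD(2)[OF assms(1)])
qed (simp add: assms(2))

lemma unfold_E_iff:
  "(xs, c, ys) \<in> unfold_E E g \<longleftrightarrow> (\<exists>a. ys = xs @ [(a, c)] \<and> walk E g xs \<and> (walk_end g xs, c, a) \<in> E)"
  unfolding unfold_E_def by blast

lemma unfold_is_graph:
  assumes "is_graph V E" "g \<in> V"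
  shows "is_graph (unfold_V E g) (unfold_E E g)"
  unfolding is_graph_def
proof
  show "unfold_E E g \<subseteq> unfold_V E g \<times> UNIV \<times> unfold_V E g"
    unfolding unfold_E_def unfold_V_def by (auto simp: walk_snoc)
  show "\<forall>xs\<in>unfold_V E g. \<exists>c ys. (xs, c, ys) \<in> unfold_E E g"
  proof
    fix xs assume "xs \<in> unfold_V E g"
    then have "walk E g xs" by (simp add: unfold_V_def)
    moreover obtain c a where "(walk_end g xs, c, a) \<in> E"
      using is_graph_succE[OF assms(1) walk_end_in[OF assms calculation]] .
    ultimately show "\<exists>c ys. (xs, c, ys) \<in> unfold_E E g" unfolding unfold_E_def by blast
  qed
qed

lemma unfold_fpath_length:
  "fpath (unfold_E E g) ys es xs \<Longrightarrow> \<exists>zs. xs = ys @ zs \<and> length zs = length es"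
proof (induction es arbitrary: ys)
  case (Cons e es)
  then obtain c a where "fpath (unfold_E E g) (ys @ [(a, c)]) es xs"
    by (cases e) (auto simp: unfold_E_iff)
  then show ?case using Cons.IH by fastforce
qed simp

lemma unfold_fpath_unique:
  "fpath (unfold_E E g) ys es xs \<Longrightarrow> fpath (unfold_E E g) ys es' xs \<Longrightarrow> es = es'"
proof (induction es arbitrary: ys es')
  case Nil
  then show ?case using unfold_fpath_length[OF Nil(2)] by simp
next
  case (Cons e es)
  obtain c a where e: "e = (ys, c, ys @ [(a, c)])" "fpath (unfold_E E g) (ys @ [(a, c)]) es xs"
    using Cons.prems(1) by (cases e) (auto simp: unfold_E_iff)
  obtain e' es'' where es': "es' = e' # es''"
    using Cons.prems unfold_fpath_length[OF Cons.prems(1)] by (cases es') auto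
  obtain c' a' where e': "e' = (ys, c', ys @ [(a', c')])"
    "fpath (unfold_E E g) (ys @ [(a', c')]) es'' xs"
    using Cons.prems(2) es' by (cases e') (auto simp: unfold_E_iff)
  have "(a, c) = (a', c')"
    using unfold_fpath_length[OF e(2)] unfold_fpath_length[OF e'(2)] by auto
  then show ?case using Cons.IH[OF e(2)] e e' es' by simp
qed

lemma unfold_fpath_exists: "walk E g xs \<Longrightarrow> \<exists>es. fpath (unfold_E E g) [] es xs"
proof (induction xs rule: rev_induct)
  case (snoc x xs)
  then obtain es where "fpath (unfold_E E g) [] es xs" by (auto simp: walk_snoc)
  moreover have "(xs, snd x, xs @ [x]) \<in> unfold_E E g"
    using snoc.prems unfolding unfold_E_iff walk_snoc by (cases x) auto
  ultimately have "fpath (unfold_E E g) [] (es @ [(xs, snd x, xs @ [x])]) (xs @ [x])"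
    by (simp add: fpath_snoc)
  then show ?case by blast
qed (auto intro: exI[of _ "[]"])

lemma unfold_is_tree:
  assumes "is_graph V E" "g \<in> V"
  shows "is_tree (unfold_V E g) (unfold_E E g) []"
  unfolding is_tree_def
proof (intro conjI ballI unfold_is_graph[OF assms])
  show "[] \<in> unfold_V E g" by (simp add: unfold_V_def)
  fix xs assume "xs \<in> unfold_V E g"
  then obtain es where es: "fpath (unfold_E E g) [] es xs"
    using unfold_fpath_exists unfolding unfold_V_def by (metis mem_Collect_eq)
  then show "\<exists>!es. fpath (unfold_E E g) [] es xs"
    using unfold_fpath_unique[OF es] by auto
qed

lemma unfold_is_morphism:
  assumes "is_graph V E" "g \<in> V"
  shows "is_morphism (unfold_V E g) (unfold_E E g) V E (walk_end g)"
  unfolding is_morphism_def unfold_V_def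
  using walk_end_in[OF assms] by (auto simp: unfold_E_iff)

definition map_edge :: "('a \<Rightarrow> 'b) \<Rightarrow> 'a \<times> 'd \<times> 'a \<Rightarrow> 'b \<times> 'd \<times> 'b" where
  "map_edge h e = (h (fst e), fst (snd e), h (snd (snd e)))"

lemma map_edge_simp [simp]: "map_edge h (a, c, b) = (h a, c, h b)"
  by (simp add: map_edge_def)

lemma map_edge_image_iff: "(x, c, y) \<in> map_edge h ` E \<longleftrightarrow> (\<exists>a b. (a, c, b) \<in> E \<and> x = h a \<and> y = h b)"
  by (force simp: map_edge_def)

lemma is_graph_image:
  assumes "is_graph V E"
  shows "is_graph (h ` V) (map_edge h ` E)"
  unfolding is_graph_def
proof (intro conjI ballI)
  show "map_edge h ` E \<subseteq> h ` V \<times> UNIV \<times> h ` V"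
    using is_graph_edgeD[OF assms] by (auto simp: map_edge_def)
  fix v' assume "v' \<in> h ` V"
  then obtain v where "v \<in> V" "v' = h v" by blast
  moreover obtain c b where "(v, c, b) \<in> E" using is_graph_succE[OF assms \<open>v \<in> V\<close>] .
  ultimately show "\<exists>c x. (v', c, x) \<in> map_edge h ` E" by (auto simp: map_edge_image_iff)
qed

lemma is_morphism_image: "is_graph V E \<Longrightarrow> is_morphism V E (h ` V) (map_edge h ` E) h"
  unfolding is_morphism_def by (force simp: map_edge_image_iff)

lemma is_morphism_inv_image:
  assumes "is_graph V E" "\<And>x. x \<in> V \<Longrightarrow> g (h x) = x"
  shows "is_morphism (h ` V) (map_edge h ` E) V E g"
  using assms is_graph_edgeD[OF assms(1)] unfolding is_morphism_def map_edge_image_iff by fastforce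

lemma fpath_map_edge: "fpath E u es v \<Longrightarrow> fpath (map_edge h ` E) (h u) (map (map_edge h) es) (h v)"
  by (induction es arbitrary: u) auto

lemma fpath_map_edge_inv:
  assumes "inj_on h V" "is_graph V E" "u \<in> V" "fpath (map_edge h ` E) (h u) es w"
  shows "\<exists>es0 w0. fpath E u es0 w0 \<and> w = h w0 \<and> es = map (map_edge h) es0"
  using assms(3,4)
proof (induction es arbitrary: u)
  case Nil
  then show ?case by (intro exI[of _ "[]"] exI[of _ u]) simp
next
  case (Cons e es)
  then obtain a c b where abc: "(a, c, b) \<in> E" "e = map_edge h (a, c, b)" "h a = h u"
    "fpath (map_edge h ` E) (h b) es w" by auto
  have "a \<in> V" "b \<in> V" using is_graph_edgeD[OF assms(2) abc(1)] by auto
  then have "a = u" using abc(3) Cons.prems(1) assms(1) by (meson inj_onD)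
  obtain es0 w0 where "fpath E b es0 w0" "w = h w0" "es = map (map_edge h) es0"
    using Cons.IH[OF \<open>b \<in> V\<close> abc(4)] by blast
  then show ?case using abc \<open>a = u\<close> by (intro exI[of _ "(a, c, b) # es0"] exI[of _ w0]) simp
qed

lemma is_tree_image:
  assumes tree: "is_tree VT ET t0" and inj: "inj_on h VT"
  shows "is_tree (h ` VT) (map_edge h ` ET) (h t0)"
  unfolding is_tree_def
proof (intro conjI ballI)
  have graph: "is_graph VT ET" and "t0 \<in> VT" using tree unfolding is_tree_def by auto
  then show "is_graph (h ` VT) (map_edge h ` ET)" "h t0 \<in> h ` VT"
    using is_graph_image by auto
  fix v' assume "v' \<in> h ` VT"
  then obtain v es where v: "v \<in> VT" "v' = h v" and es: "fpath ET t0 es v"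
    using tree unfolding is_tree_def by blast
  show "\<exists>!es. fpath (map_edge h ` ET) (h t0) es v'"
  proof (rule ex1I)
    show "fpath (map_edge h ` ET) (h t0) (map (map_edge h) es) v'"
      using fpath_map_edge[OF es] v(2) by simp
  next
    fix es' assume "fpath (map_edge h ` ET) (h t0) es' v'"
    then obtain es0 w0 where es0: "fpath ET t0 es0 w0" "v' = h w0" "es' = map (map_edge h) es0"
      using fpath_map_edge_inv[OF inj graph \<open>t0 \<in> VT\<close>] by blast
    then have "w0 = v"
      using fpath_target_in[OF graph \<open>t0 \<in> VT\<close> es0(1)] v inj by (meson inj_onD)
    then show "es' = map (map_edge h) es"
      using is_tree_fpath_unique[OF tree es0(1)] es es0(3) by simp
  qed
qed

text \<open>Universality only speaks about trees with vertices in the type of K, so a tree of any type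
  has to be moved there along an injection first.\<close>

lemma universal_tree_morphism:
  fixes h :: "'t \<Rightarrow> 'k" and K :: "'k set"
  assumes univ: "universal val K V E" and tree: "is_tree VT ET t0"
    and inj: "inj_on h VT" and small: "card_lt (h ` VT) K"
  shows "\<exists>\<phi>. is_morphism VT ET V E \<phi> \<and> gval val E (\<phi> t0) \<le> gval val ET t0"
proof -
  have graph: "is_graph VT ET" and "t0 \<in> VT" using tree unfolding is_tree_def by auto
  obtain \<psi> where \<psi>: "is_morphism (h ` VT) (map_edge h ` ET) V E \<psi>"
    "gval val E (\<psi> (h t0)) \<le> gval val (map_edge h ` ET) (h t0)"
    using univ is_tree_image[OF tree inj] small unfolding universal_def by blast
  have "gval val (map_edge h ` ET) (h t0) \<le> gval val ET (inv_into VT h (h t0))"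
    using is_morphism_inv_image[OF graph, of "inv_into VT h" h] inj
    by (intro gval_morphism_le) (simp add: inv_into_f_f)
  then have "gval val E ((\<psi> \<circ> h) t0) \<le> gval val ET t0"
    using \<psi>(2) inj \<open>t0 \<in> VT\<close> by (simp add: inv_into_f_f)
  moreover have "is_morphism VT ET V E (\<psi> \<circ> h)"
    by (rule is_morphism_comp[OF is_morphism_image[OF graph] \<psi>(1)])
  ultimately show ?thesis by blast
qed

unbundle cardinal_syntax

lemma card_of_lists_le_infinite:
  assumes inf: "infinite B" and AB: "|A| \<le>o |B|"
  shows "|lists A| \<le>o |B|"
proof -
  define L where "L n = {xs \<in> lists A. length xs = n}" for n
  have "|L n| \<le>o |B|" for n
  proof (induction n)
    case 0
    have "L 0 = {[]}" unfolding L_def by auto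
    then show ?case
      using inf by (metis card_of_singl_ordLeq finite.emptyI)
  next
    case (Suc n)
    have "L (Suc n) = (\<lambda>(a, xs). a # xs) ` (A \<times> L n)"
      unfolding L_def by (auto simp: length_Suc_conv image_iff)
    moreover have "|A \<times> L n| \<le>o |B|"
      using card_of_Times_ordLeq_infinite_Field[of "|B|" A "L n"] inf AB Suc
      by (simp add: card_of_Card_order Field_card_of card_of_card_order_on)
    ultimately show ?case using card_of_image ordLeq_transitive by metis
  qed
  moreover have "lists A = (\<Union>n. L n)" unfolding L_def by auto
  ultimately show ?thesis
    using card_of_UNION_ordLeq_infinite[OF inf, of UNIV L] inf infinite_iff_card_of_nat by auto
qed

section \<open>Epsilon-valuations on monotone graphs\<close>

lemma INF_attained_wellorder:
  fixes g :: "'a \<Rightarrow> 'x::{complete_linorder, wellorder}"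
  assumes "A \<noteq> {}"
  obtains a where "a \<in> A" "g a = (INF a\<in>A. g a)"
proof -
  define y where "y = (LEAST y. y \<in> g ` A)"
  obtain a0 where "a0 \<in> A" using assms by blast
  then have "y \<in> g ` A" unfolding y_def by (metis LeastI imageI)
  then obtain a where a: "a \<in> A" "g a = y" by blast
  have "g a \<le> g b" if "b \<in> A" for b
    unfolding a(2) y_def using that by (simp add: Least_le)
  then have "g a = (INF a\<in>A. g a)" using a(1) by (intro antisym INF_greatest INF_lower) auto
  then show ?thesis using a(1) that by blast
qed

lemma enumerate_range_strict_mono:
  fixes f :: "nat \<Rightarrow> nat"
  assumes "strict_mono f"
  shows "enumerate (range f) n = f n"
proof (induction n)
  case 0
  show ?case
    unfolding enumerate_0 using assms by (auto intro!: Least_equality simp: strict_mono_less_eq)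
next
  case (Suc n)
  have "infinite (range f)"
    using assms finite_imageD infinite_UNIV_nat strict_mono_imp_inj_on by blast
  then have "enumerate (range f) (Suc n) = (LEAST s. s \<in> range f \<and> f n < s)"
    using enumerate_Suc'' Suc by metis
  also have "\<dots> = f (Suc n)"
    using assms by (auto intro!: Least_equality simp: strict_mono_less strict_mono_less_eq)
  finally show ?case .
qed

lemma eps_val_infinite:
  fixes f :: "nat \<Rightarrow> nat"
  assumes "strict_mono f" "{i. w i \<noteq> None} = range f"
  shows "eps_val val w = val (\<lambda>n. the (w (f n)))"
proof -
  have "infinite (range f)"
    using assms(1) finite_imageD infinite_UNIV_nat strict_mono_imp_inj_on by blast
  then show ?thesis
    unfolding eps_val_def assms(2) using enumerate_range_strict_mono[OF assms(1)] by simp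
qed

lemma eps_val_finite:
  "eps_val val (prepend xs (\<lambda>_. None)) =
    (INF w'. val (prepend (map the (filter (\<lambda>x. x \<noteq> None) xs)) w'))"
proof -
  define W where "W = prepend xs (\<lambda>_. None)"
  have W: "W i = (if i < length xs then xs ! i else None)" for i
    unfolding W_def prepend_def by simp
  have "{i. W i \<noteq> None} \<subseteq> {..<length xs}" using W by auto
  then have "finite {i. W i \<noteq> None}" using finite_subset by blast
  define N where "N = (LEAST N. \<forall>i\<ge>N. W i = None)"
  have beyond: "\<forall>i\<ge>length xs. W i = None" by (simp add: W)
  then have "N \<le> length xs" unfolding N_def by (rule Least_le)
  have "\<forall>i\<ge>N. W i = None" unfolding N_def using beyond by (rule LeastI)
  then have "filter (\<lambda>i. W i \<noteq> None) [N..<length xs] = []" by (auto simp: filter_empty_conv)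
  moreover have "[0..<length xs] = [0..<N] @ [N..<length xs]"
    using \<open>N \<le> length xs\<close> by (metis le_add_diff_inverse upt_add_eq_append zero_le)
  ultimately have "filter (\<lambda>i. W i \<noteq> None) [0..<length xs] = filter (\<lambda>i. W i \<noteq> None) [0..<N]"
    by simp
  moreover have "map (the \<circ> W) (filter (\<lambda>i. W i \<noteq> None) [0..<length xs]) =
      map the (filter (\<lambda>x. x \<noteq> None) xs)"
  proof -
    have "map the (filter (\<lambda>x. x \<noteq> None) xs) =
        map the (filter (\<lambda>x. x \<noteq> None) (map ((!) xs) [0..<length xs]))"
      by (simp add: map_nth)
    also have "\<dots> = map (\<lambda>i. the (xs ! i)) (filter (\<lambda>i. xs ! i \<noteq> None) [0..<length xs])"
      by (simp add: filter_map comp_def)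
    also have "filter (\<lambda>i. xs ! i \<noteq> None) [0..<length xs] = filter (\<lambda>i. W i \<noteq> None) [0..<length xs]"
      by (rule filter_cong) (auto simp: W)
    also have "map (\<lambda>i. the (xs ! i)) \<dots> = map (the \<circ> W) (filter (\<lambda>i. W i \<noteq> None) [0..<length xs])"
      by (rule map_cong) (auto simp: W)
    finally show ?thesis ..
  qed
  ultimately show ?thesis
    using \<open>finite {i. W i \<noteq> None}\<close> unfolding eps_val_def W_def[symmetric] N_def[symmetric] Let_def
    by simp
qed

locale eps_mono_graph =
  fixes V :: "'v set" and E :: "('v \<times> 'c option \<times> 'v) set"
  assumes graph: "is_graph V E" and mono: "mono_graph V E (eps_order E)"
begin

definition coloured :: "('v \<times> 'c \<times> 'v) set" where
  "coloured = {(a, c, b). (a, Some c, b) \<in> E}"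

lemma eps_order_refl: "x \<in> V \<Longrightarrow> (x, x) \<in> eps_order E"
  using mono unfolding mono_graph_def partial_order_on_def preorder_on_def refl_on_def by blast

lemma eps_order_trans: "(x, y) \<in> eps_order E \<Longrightarrow> (y, z) \<in> eps_order E \<Longrightarrow> (x, z) \<in> eps_order E"
  using mono unfolding mono_graph_def partial_order_on_def preorder_on_def trans_def by blast

lemma coloured_edge_lift:
  assumes "(x, y) \<in> eps_order E" "(x, Some c, z) \<in> E"
  shows "(y, c, z) \<in> coloured"
  using assms mono eps_order_refl[OF is_graph_edgeD(2)[OF graph assms(2)]]
  unfolding mono_graph_def coloured_def by blast

lemma path_vertices_in:
  assumes "\<And>i. (p i, w i, p (Suc i)) \<in> E" "p 0 \<in> V"
  shows "p i \<in> V"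
  using assms is_graph_edgeD(2)[OF graph] by (cases i) auto

text \<open>The epsilon-edges of a path go down in the order, so the source of every coloured edge is
  below the target of the previous coloured edge, and the coloured edge can be moved up there.\<close>

lemma path_eps_descent:
  assumes path: "\<And>i. (p i, w i, p (Suc i)) \<in> E" "p 0 \<in> V"
    and "i \<le> j" "\<And>l. i \<le> l \<Longrightarrow> l < j \<Longrightarrow> w l = None"
  shows "(p j, p i) \<in> eps_order E"
  using assms(3,4)
proof (induction j rule: dec_induct)
  case base
  then show ?case using eps_order_refl path_vertices_in[OF path] by blast
next
  case (step n)
  then have "(p n, None, p (Suc n)) \<in> E" using path(1)[of n] by simp
  moreover have "(p n, p i) \<in> eps_order E" using step by simp
  ultimately show ?case using eps_order_trans unfolding eps_order_def by blast
qed

lemma eps_val_le_coloured_infinite: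
  assumes path: "\<And>i. (p i, w i, p (Suc i)) \<in> E" "p 0 = v" "v \<in> V"
    and inf: "infinite {i. w i \<noteq> None}"
  shows "eps_val val w \<le> gval val coloured v"
proof -
  define k where "k = enumerate {i. w i \<noteq> None}"
  have k: "strict_mono k" "range k = {i. w i \<noteq> None}"
    unfolding k_def using inf by (simp_all add: strict_mono_enumerate range_enumerate)
  \<comment> \<open>k n is the position of the n-th coloured edge, b n the position just after the previous one\<close>
  define b where "b n = (case n of 0 \<Rightarrow> 0 | Suc m \<Rightarrow> Suc (k m))" for n
  have "b n \<le> k n" for n
    using k(1) by (cases n) (auto simp: b_def strict_mono_less Suc_leI)
  moreover have "w l = None" if "b n \<le> l" "l < k n" for n l
  proof (rule ccontr)
    assume "w l \<noteq> None"
    then obtain m where "l = k m" using k(2) by blast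
    then show False
      using that k(1) by (cases n) (auto simp: b_def strict_mono_less Suc_le_eq)
  qed
  ultimately have below: "(p (k n), p (b n)) \<in> eps_order E" for n
    using path_eps_descent[of p w, OF path(1)] path(2,3) by blast
  have "(p (b n), the (w (k n)), p (b (Suc n))) \<in> coloured" for n
  proof -
    obtain c where "w (k n) = Some c" using k(2) by blast
    then show ?thesis
      using coloured_edge_lift[OF below] path(1)[of "k n"] by (simp add: b_def)
  qed
  then have "(\<lambda>n. the (w (k n))) \<in> path_words coloured v"
    using path(2) by (intro path_wordsI[of "p \<circ> b"]) (auto simp: b_def)
  then show ?thesis
    unfolding eps_val_def k_def using inf by (simp add: gval_upper)
qed

lemma coloured_shadow:
  assumes path: "\<And>i. (p i, w i, p (Suc i)) \<in> E" "p 0 = v" "v \<in> V"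
  shows "\<exists>es x. fpath coloured v es x \<and>
    map (fst \<circ> snd) es = map (the \<circ> w) (filter (\<lambda>i. w i \<noteq> None) [0..<j]) \<and>
    (p j, x) \<in> eps_order E \<and> x \<in> V"
proof (induction j)
  case 0
  show ?case using eps_order_refl path(2,3) by (intro exI[of _ "[]"] exI[of _ v]) simp
next
  case (Suc j)
  then obtain es x where es: "fpath coloured v es x"
    "map (fst \<circ> snd) es = map (the \<circ> w) (filter (\<lambda>i. w i \<noteq> None) [0..<j])"
    "(p j, x) \<in> eps_order E" "x \<in> V" by blast
  show ?case
  proof (cases "w j")
    case None
    then have "(p (Suc j), p j) \<in> eps_order E" using path(1)[of j] unfolding eps_order_def by simp
    then show ?thesis
      using es None eps_order_trans[of "p (Suc j)" "p j" x]
      by (intro exI[of _ es] exI[of _ x]) (simp add: comp_def)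
  next
    case (Some c)
    then have "(x, c, p (Suc j)) \<in> coloured"
      using coloured_edge_lift[OF es(3)] path(1)[of j] by simp
    then have "fpath coloured v (es @ [(x, c, p (Suc j))]) (p (Suc j))"
      using es(1) by (simp add: fpath_snoc)
    moreover have "p (Suc j) \<in> V" using path_vertices_in[of p w] path by simp
    moreover have "map (fst \<circ> snd) (es @ [(x, c, p (Suc j))]) =
        map (the \<circ> w) (filter (\<lambda>i. w i \<noteq> None) [0..<Suc j])"
      using es(2) Some by simp
    ultimately show ?thesis using eps_order_refl by blast
  qed
qed

lemma eps_val_le_coloured_finite:
  assumes path: "\<And>i. (p i, w i, p (Suc i)) \<in> E" "p 0 = v" "v \<in> V"
    and fin: "finite {i. w i \<noteq> None}"
    and coloured_succ: "\<forall>x\<in>V. \<exists>c y. (x, Some c, y) \<in> E"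
  shows "eps_val val w \<le> gval val coloured v"
proof -
  define N where "N = (LEAST N. \<forall>i\<ge>N. w i = None)"
  define u where "u = map (the \<circ> w) (filter (\<lambda>i. w i \<noteq> None) [0..<N])"
  obtain es x where es: "fpath coloured v es x" "map (fst \<circ> snd) es = u" "x \<in> V"
    using coloured_shadow[OF path(1-3), of N] unfolding u_def by blast
  have "is_graph V coloured"
    using graph coloured_succ is_graph_edgeD[OF graph] unfolding is_graph_def coloured_def by blast
  then obtain q w' where "q 0 = x" "\<And>i. (q i, w' i, q (Suc i)) \<in> coloured"
    using is_graph_infinite_path es(3) by metis
  then have words: "prepend u w' \<in> path_words coloured v"
    using path_words_prepend[OF es(1)] es(2) by metis
  have "eps_val val w = (INF w'. val (prepend u w'))"
    unfolding eps_val_def u_def N_def using fin by (simp add: Let_def)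
  also have "\<dots> \<le> val (prepend u w')" by (rule INF_lower) simp
  also have "\<dots> \<le> gval val coloured v" by (rule gval_upper[OF words])
  finally show ?thesis .
qed

lemma gval_eps_le_coloured:
  assumes "v \<in> V" and "\<forall>x\<in>V. \<exists>c y. (x, Some c, y) \<in> E"
  shows "gval (eps_val val) E v \<le> gval val coloured v"
proof (rule gval_least)
  fix w assume "w \<in> path_words E v"
  then obtain p where "p 0 = v" "\<And>i. (p i, w i, p (Suc i)) \<in> E"
    unfolding path_words_def by blast
  then show "eps_val val w \<le> gval val coloured v"
    using eps_val_le_coloured_infinite eps_val_le_coloured_finite assms by blast
qed

end

section \<open>Contracting epsilon-trees\<close>

definition coloured_word :: "('k \<times> 'c option \<times> 'k) list \<Rightarrow> 'c list" where
  "coloured_word es = map the (filter (\<lambda>x. x \<noteq> None) (map (fst \<circ> snd) es))"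

lemma coloured_word_Nil [simp]: "coloured_word [] = []"
  by (simp add: coloured_word_def)

lemma coloured_word_append [simp]: "coloured_word (xs @ ys) = coloured_word xs @ coloured_word ys"
  by (simp add: coloured_word_def)

definition concat_segs :: "(nat \<Rightarrow> 'e list) \<Rightarrow> nat \<Rightarrow> 'e list" where
  "concat_segs seg n = concat (map seg [0..<n])"

lemma concat_segs_0 [simp]: "concat_segs seg 0 = []"
  by (simp add: concat_segs_def)

lemma concat_segs_Suc [simp]: "concat_segs seg (Suc n) = concat_segs seg n @ seg n"
  by (simp add: concat_segs_def)

lemma concat_segs_prefix: "m \<le> n \<Longrightarrow> \<exists>r. concat_segs seg n = concat_segs seg m @ r"
  by (induction n rule: dec_induct) auto

lemma concat_segs_nth_eq:
  assumes "i < length (concat_segs seg m)" "i < length (concat_segs seg n)"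
  shows "concat_segs seg m ! i = concat_segs seg n ! i"
  using concat_segs_prefix[of m "max m n" seg] concat_segs_prefix[of n "max m n" seg] assms
  by (metis max.cobounded1 max.cobounded2 nth_append)

lemma length_concat_segs_ge:
  assumes "\<And>n. seg n \<noteq> []"
  shows "n \<le> length (concat_segs seg n)"
proof (induction n)
  case (Suc n)
  then show ?case using assms[of n] by (cases "seg n") auto
qed simp

lemma fpath_concat_segs:
  "(\<And>n. n < N \<Longrightarrow> fpath E (a n) (seg n) (a (Suc n))) \<Longrightarrow> fpath E (a 0) (concat_segs seg N) (a N)"
  by (induction N) (auto simp: fpath_append)

lemma concat_segs_index:
  assumes "\<And>n. seg n \<noteq> []"
  obtains n j where "i = length (concat_segs seg n) + j" "j < length (seg n)"
proof -
  have ex: "\<exists>n. i < length (concat_segs seg (Suc n))"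
    using length_concat_segs_ge[of seg, OF assms, of "Suc i"] by (intro exI[of _ i]) simp
  define n where "n = (LEAST n. i < length (concat_segs seg (Suc n)))"
  have "i < length (concat_segs seg (Suc n))"
    unfolding n_def by (rule LeastI_ex[OF ex])
  moreover have "length (concat_segs seg n) \<le> i"
  proof (cases n)
    case (Suc k)
    then have "\<not> i < length (concat_segs seg (Suc k))"
      using Least_le[of "\<lambda>n. i < length (concat_segs seg (Suc n))" k] unfolding n_def by fastforce
    then show ?thesis using Suc by simp
  qed simp
  ultimately show ?thesis
    using that[of n "i - length (concat_segs seg n)"] by simp
qed

lemma concat_segs_infinite_path:
  assumes segs: "\<And>n. fpath E (a n) (seg n) (a (Suc n))" and nonempty: "\<And>n. seg n \<noteq> []"
  obtains p w where "p 0 = a 0" "\<And>i. (p i, w i, p (Suc i)) \<in> E"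
    "\<And>n j. j < length (seg n) \<Longrightarrow> w (length (concat_segs seg n) + j) = fst (snd (seg n ! j))"
proof -
  define ed where "ed j = concat_segs seg (Suc j) ! j" for j
  have len: "j < length (concat_segs seg (Suc j))" for j
    using length_concat_segs_ge[of seg, OF nonempty, of "Suc j"] by simp
  have ed: "concat_segs seg m ! j = ed j" if "j < length (concat_segs seg m)" for m j
    unfolding ed_def using concat_segs_nth_eq[OF that len] .
  have fp: "fpath E (a 0) (concat_segs seg m) (a m)" for m
    by (rule fpath_concat_segs[of m E a seg, OF segs])
  have "fst (ed 0) = a 0"
    using fpath_nth_source[OF fp, of 0 1] len[of 0] ed[of 0 1] by simp
  moreover have "(fst (ed i), fst (snd (ed i)), fst (ed (Suc i))) \<in> E" for i
  proof -
    have l: "Suc i < length (concat_segs seg (Suc (Suc i)))" using len[of "Suc i"] by simp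
    then show ?thesis
      using fpath_nth_edge[OF fp l[THEN Suc_lessD]] fpath_nth_source[OF fp l]
        ed[OF l] ed[OF l[THEN Suc_lessD]]
      by (cases "ed i") auto
  qed
  moreover have "fst (snd (ed (length (concat_segs seg n) + j))) = fst (snd (seg n ! j))"
    if "j < length (seg n)" for n j
    using that ed[of "length (concat_segs seg n) + j" "Suc n"] by (simp add: nth_append)
  ultimately show ?thesis
    using that[of "\<lambda>i. fst (ed i)" "\<lambda>i. fst (snd (ed i))"] by blast
qed

text \<open>The contraction of an epsilon-tree T keeps the root and the targets of coloured edges (the
  anchors); its edge t -c-> t' stands for an epsilon-path of T from t followed by a c-edge into t'.
  An anchor from which an infinite epsilon-path starts also gets an infinite tail (vertices
  Inr (t, n)) labelled by a word realising the infimum in the definition of eps_val, so that every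
  path of the contraction has a counterpart in T of the same value.\<close>

locale eps_tree =
  fixes VT :: "'k set" and ET :: "('k \<times> 'c option \<times> 'k) set" and t0 :: 'k
    and val :: "(nat \<Rightarrow> 'c) \<Rightarrow> 'x::{complete_linorder, wellorder}"
  assumes tree: "is_tree VT ET t0"
begin

lemma graph: "is_graph VT ET" and root_in: "t0 \<in> VT"
  using tree unfolding is_tree_def by auto

definition anchor :: "'k \<Rightarrow> bool" where
  "anchor t \<longleftrightarrow> t \<in> VT \<and> (t = t0 \<or> (\<exists>s c. (s, Some c, t) \<in> ET))"

definition eps_reach :: "'k \<Rightarrow> 'k \<Rightarrow> bool" where
  "eps_reach t s \<longleftrightarrow> (\<exists>es. fpath ET t es s \<and> (\<forall>e\<in>set es. fst (snd e) = None))"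

definition eps_ray :: "'k \<Rightarrow> bool" where
  "eps_ray t \<longleftrightarrow> (\<exists>p. p 0 = t \<and> (\<forall>i. (p i, None, p (Suc i)) \<in> ET))"

definition root_path :: "'k \<Rightarrow> ('k \<times> 'c option \<times> 'k) list" where
  "root_path t = (THE es. fpath ET t0 es t)"

definition best_tail :: "'k \<Rightarrow> nat \<Rightarrow> 'c" where
  "best_tail t = (SOME w'. val (prepend (coloured_word (root_path t)) w') =
                            (INF w''. val (prepend (coloured_word (root_path t)) w'')))"

definition contr_E :: "(('k + 'k \<times> nat) \<times> 'c \<times> ('k + 'k \<times> nat)) set" where
  "contr_E = {(Inl t, c, Inl t') | t c t'. anchor t \<and> (\<exists>s. eps_reach t s \<and> (s, Some c, t') \<in> ET)}
      \<union> {(Inl t, best_tail t 0, Inr (t, Suc 0)) | t. anchor t \<and> eps_ray t}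
      \<union> {(Inr (t, Suc n), best_tail t (Suc n), Inr (t, Suc (Suc n))) | t n. anchor t \<and> eps_ray t}"

definition contr_V :: "('k + 'k \<times> nat) set" where
  "contr_V = Inl ` {t. anchor t} \<union> {Inr (t, Suc n) | t n. anchor t \<and> eps_ray t}"

definition contr_walk :: "('k \<times> 'c option \<times> 'k) list \<Rightarrow> (('k + 'k \<times> nat) \<times> 'c) list" where
  "contr_walk es =
    map (\<lambda>e. (Inl (snd (snd e)), the (fst (snd e)))) (filter (\<lambda>e. fst (snd e) \<noteq> None) es)"

lemma best_tail:
  "val (prepend (coloured_word (root_path t)) (best_tail t)) =
     (INF w'. val (prepend (coloured_word (root_path t)) w'))"
proof -
  let ?g = "\<lambda>w'. val (prepend (coloured_word (root_path t)) w')"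
  obtain w' where "?g w' = (INF w'. ?g w')" by (rule INF_attained_wellorder[of UNIV ?g]) auto
  then show ?thesis unfolding best_tail_def by (metis (mono_tags, lifting) someI)
qed

lemma anchor_root: "anchor t0"
  using root_in unfolding anchor_def by simp

lemma eps_reach_refl: "eps_reach t t"
  unfolding eps_reach_def by (intro exI[of _ "[]"]) simp

lemma eps_reach_snoc:
  assumes "eps_reach a s" "(s, None, t) \<in> ET"
  shows "eps_reach a t"
proof -
  obtain es where "fpath ET a es s" "\<forall>e\<in>set es. fst (snd e) = None"
    using assms(1) unfolding eps_reach_def by blast
  then show ?thesis
    using assms(2) unfolding eps_reach_def
    by (intro exI[of _ "es @ [(s, None, t)]"]) (simp add: fpath_snoc)
qed

lemma fpath_root_path: "t \<in> VT \<Longrightarrow> fpath ET t0 (root_path t) t"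
  unfolding root_path_def using tree unfolding is_tree_def by (metis theI')

lemma root_path_eq: "fpath ET t0 es t \<Longrightarrow> root_path t = es"
  using is_tree_fpath_unique[OF tree] fpath_root_path fpath_target_in[OF graph root_in] by metis

lemma contr_E_subset: "contr_E \<subseteq> contr_V \<times> UNIV \<times> contr_V"
proof
  fix e assume "e \<in> contr_E"
  then show "e \<in> contr_V \<times> UNIV \<times> contr_V"
  proof (unfold contr_E_def, elim UnE CollectE exE conjE)
    fix t c t' s assume e: "e = (Inl t, c, Inl t')" "anchor t" "(s, Some c, t') \<in> ET"
    have "anchor t'" using e(3) is_graph_edgeD(2)[OF graph e(3)] unfolding anchor_def by blast
    then show ?thesis using e(1,2) unfolding contr_V_def by blast
  qed (auto simp: contr_V_def)
qed

lemma contr_is_graph: "is_graph contr_V contr_E"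
  unfolding is_graph_def
proof (intro conjI contr_E_subset ballI)
  fix x assume "x \<in> contr_V"
  then consider (l) t where "x = Inl t" "anchor t"
    | (r) t n where "x = Inr (t, Suc n)" "anchor t" "eps_ray t"
    unfolding contr_V_def by blast
  then show "\<exists>c v'. (x, c, v') \<in> contr_E"
  proof cases
    case r
    then show ?thesis unfolding contr_E_def by blast
  next
    case l
    then have "t \<in> VT" unfolding anchor_def by simp
    then obtain p w where p: "p 0 = t" "\<And>i. (p i, w i, p (Suc i)) \<in> ET"
      using is_graph_infinite_path[OF graph] by metis
    show ?thesis
    proof (cases "\<forall>i. w i = None")
      case True
      then have "eps_ray t" unfolding eps_ray_def using p by metis
      then show ?thesis using l unfolding contr_E_def by blast
    next
      case False
      define i where "i = (LEAST i. w i \<noteq> None)"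
      have "w i \<noteq> None" unfolding i_def using False by (metis (mono_tags, lifting) LeastI)
      then obtain c where "(p i, Some c, p (Suc i)) \<in> ET" using p(2) by (metis option.exhaust)
      moreover have "w k = None" if "k < i" for k
        using not_less_Least[OF that[unfolded i_def]] by simp
      then have "eps_reach t (p i)"
        unfolding eps_reach_def using fpath_path_prefix[of p w, OF p(2), of i] p(1)
        by (intro exI[of _ "path_prefix p w i"]) (auto simp: path_prefix_def)
      ultimately show ?thesis using l unfolding contr_E_def by blast
    qed
  qed
qed

lemma contr_walk_root_path:
  assumes "fpath ET t0 es t"
  shows "walk contr_E (Inl t0) (contr_walk es) \<and>
    (\<exists>a. walk_end (Inl t0) (contr_walk es) = Inl a \<and> anchor a \<and> eps_reach a t)"
  using assms
proof (induction es arbitrary: t rule: rev_induct)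
  case Nil
  then show ?case using anchor_root eps_reach_refl by (simp add: contr_walk_def)
next
  case (snoc e es)
  obtain t' x where e: "e = (t', x, t)" "fpath ET t0 es t'" "(t', x, t) \<in> ET"
    using snoc.prems by (cases e) (auto simp: fpath_snoc)
  obtain a where IH: "walk contr_E (Inl t0) (contr_walk es)"
    "walk_end (Inl t0) (contr_walk es) = Inl a" "anchor a" "eps_reach a t'"
    using snoc.IH[OF e(2)] by blast
  show ?case
  proof (cases x)
    case None
    then show ?thesis using IH eps_reach_snoc[OF IH(4)] e by (auto simp: contr_walk_def)
  next
    case (Some c)
    then have "contr_walk (es @ [e]) = contr_walk es @ [(Inl t, c)]"
      using e(1) by (simp add: contr_walk_def)
    moreover have "(Inl a, c, Inl t) \<in> contr_E"
      using IH(3,4) e(3) Some unfolding contr_E_def by blast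
    moreover have "anchor t"
      using e(3) Some is_graph_edgeD(2)[OF graph e(3)] unfolding anchor_def by blast
    ultimately show ?thesis using IH(1,2) eps_reach_refl by (simp add: walk_snoc)
  qed
qed

lemma contr_in_colour_unique:
  assumes "(x, c, b) \<in> contr_E" "(x', c', b) \<in> contr_E"
  shows "c = c'"
  using assms
proof (unfold contr_E_def, elim UnE CollectE exE conjE)
  fix t ca t' s t2 cb t2' s2
  assume "(x, c, b) = (Inl t, ca, Inl t')" "(s, Some ca, t') \<in> ET"
    "(x', c', b) = (Inl t2, cb, Inl t2')" "(s2, Some cb, t2') \<in> ET"
  then show "c = c'" using is_tree_in_edge_unique[OF tree, of s "Some ca" t' s2 "Some cb"] by auto
qed auto

lemma contr_edge_segment:
  assumes "(Inl a, c, Inl b) \<in> contr_E"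
  obtains sg where "fpath ET a sg b" "sg \<noteq> []" "coloured_word sg = [c]"
    "\<And>k. k < length sg - 1 \<Longrightarrow> fst (snd (sg ! k)) = None" "fst (snd (sg ! (length sg - 1))) = Some c"
proof -
  obtain s es where s: "fpath ET a es s" "\<forall>e\<in>set es. fst (snd e) = None" "(s, Some c, b) \<in> ET"
    using assms unfolding contr_E_def eps_reach_def by blast
  show ?thesis
  proof (rule that[of "es @ [(s, Some c, b)]"])
    show "coloured_word (es @ [(s, Some c, b)]) = [c]"
      using s(2) by (simp add: coloured_word_def filter_empty_conv)
    show "\<And>k. k < length (es @ [(s, Some c, b)]) - 1 \<Longrightarrow>
      fst (snd ((es @ [(s, Some c, b)]) ! k)) = None"
      using s(2) by (auto simp: nth_append)
  qed (use s in \<open>auto simp: fpath_snoc\<close>)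
qed

lemma contr_E_from_Inl:
  "(Inl a, c, y) \<in> contr_E \<Longrightarrow> (\<exists>b. y = Inl b) \<or> (y = Inr (a, Suc 0) \<and> c = best_tail a 0 \<and> eps_ray a)"
  unfolding contr_E_def by blast

lemma contr_E_from_Inr:
  "(Inr (t, n), c, y) \<in> contr_E \<Longrightarrow>
    \<exists>n'. n = Suc n' \<and> y = Inr (t, Suc (Suc n')) \<and> c = best_tail t (Suc n')"
  unfolding contr_E_def by blast

lemma contr_Inl_prefix:
  assumes q: "q 0 = Inl t0" "\<And>i. (q i, w i, q (Suc i)) \<in> contr_E"
    and prefix: "\<And>n. n \<le> J \<Longrightarrow> q n = Inl (a n)"
  shows "\<exists>es. fpath ET t0 es (a J) \<and> coloured_word es = map w [0..<J]"
  using prefix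
proof (induction J)
  case 0
  then show ?case using q(1) by (intro exI[of _ "[]"]) simp
next
  case (Suc J)
  then have "\<And>n. n \<le> J \<Longrightarrow> q n = Inl (a n)" by simp
  then obtain es where es: "fpath ET t0 es (a J)" "coloured_word es = map w [0..<J]"
    using Suc.IH by blast
  have "(Inl (a J), w J, Inl (a (Suc J))) \<in> contr_E" using q(2)[of J] Suc.prems by simp
  then obtain sg where "fpath ET (a J) sg (a (Suc J))" "coloured_word sg = [w J]"
    by (rule contr_edge_segment)
  then show ?case using es by (intro exI[of _ "es @ sg"]) (auto simp: fpath_append)
qed

lemma contr_path_tail:
  assumes "\<And>i. (q i, w i, q (Suc i)) \<in> contr_E" "q n = Inr (a, Suc 0)"
  shows "q (n + k) = Inr (a, Suc k) \<and> w (n + k) = best_tail a (Suc k)"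
proof (induction k)
  case 0
  then show ?case using contr_E_from_Inr[of a "Suc 0"] assms by (metis add_0_right)
next
  case (Suc k)
  then have "q (n + Suc k) = Inr (a, Suc (Suc k))"
    using contr_E_from_Inr assms(1)[of "n + k"] by fastforce
  then show ?case using contr_E_from_Inr assms(1)[of "n + Suc k"] by fastforce
qed

lemma contr_word_leaving_Inl:
  assumes q: "q 0 = Inl t0" "\<And>i. (q i, w i, q (Suc i)) \<in> contr_E" and leaves: "q n \<notin> range Inl"
  shows "\<exists>W \<in> path_words ET t0. val w \<le> eps_val val W"
proof -
  define n0 where "n0 = (LEAST n. q n \<notin> range Inl)"
  have "q n0 \<notin> range Inl" unfolding n0_def using leaves by (rule LeastI)
  moreover have "q 0 \<in> range Inl" using q(1) by simp
  ultimately have "n0 \<noteq> 0" by (intro notI) simp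
  then obtain J where J: "n0 = Suc J" using not0_implies_Suc by blast
  have before: "q n \<in> range Inl" if "n \<le> J" for n
    using not_less_Least[of n "\<lambda>n. q n \<notin> range Inl"] that J unfolding n0_def by auto
  define a where "a n = projl (q n)" for n
  have a: "q n = Inl (a n)" if "n \<le> J" for n
    using before[OF that] unfolding a_def by auto
  have "(Inl (a J), w J, q n0) \<in> contr_E" using q(2)[of J] a[of J] J by simp
  then have jump: "q n0 = Inr (a J, Suc 0)" "w J = best_tail (a J) 0" "eps_ray (a J)"
    using contr_E_from_Inl \<open>q n0 \<notin> range Inl\<close> by blast+
  obtain es where es: "fpath ET t0 es (a J)" "coloured_word es = map w [0..<J]"
    using contr_Inl_prefix[OF q a] by blast
  obtain p where p: "p 0 = a J" "\<And>i. (p i, None, p (Suc i)) \<in> ET"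
    using jump(3) unfolding eps_ray_def by blast
  have W: "prepend (map (fst \<circ> snd) es) (\<lambda>_. None) \<in> path_words ET t0"
    by (rule path_words_prepend[OF es(1) p])
  have "prepend (map w [0..<J]) (best_tail (a J)) = w"
  proof
    fix n
    consider "n < J" | "n = J" | "n0 \<le> n" using J by linarith
    then show "prepend (map w [0..<J]) (best_tail (a J)) n = w n"
    proof cases
      case 3
      then have "w n = best_tail (a J) (Suc (n - n0))"
        using contr_path_tail[OF q(2) jump(1), of "n - n0"] by simp
      moreover have "\<not> n < J" "n - J = Suc (n - n0)" using 3 J by auto
      ultimately show ?thesis by (simp add: prepend_def)
    qed (use jump(2) in \<open>auto simp: prepend_def\<close>)
  qed
  then have "val w = (INF w'. val (prepend (coloured_word es) w'))"
    using best_tail[of "a J"] root_path_eq[OF es(1)] es(2) by simp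
  also have "\<dots> = eps_val val (prepend (map (fst \<circ> snd) es) (\<lambda>_. None))"
    by (simp add: eps_val_finite coloured_word_def)
  finally show ?thesis using W by auto
qed

lemma contr_word_staying_Inl:
  assumes q: "q 0 = Inl t0" "\<And>i. (q i, w i, q (Suc i)) \<in> contr_E"
    and stays: "\<And>n. q n \<in> range Inl"
  shows "\<exists>W \<in> path_words ET t0. val w \<le> eps_val val W"
proof -
  define a where "a n = projl (q n)" for n
  have a: "q n = Inl (a n)" for n using stays[of n] unfolding a_def by auto
  have "\<exists>sg. fpath ET (a n) sg (a (Suc n)) \<and> sg \<noteq> [] \<and>
      (\<forall>k < length sg - 1. fst (snd (sg ! k)) = None) \<and>
      fst (snd (sg ! (length sg - 1))) = Some (w n)" for n
    using contr_edge_segment[of "a n" "w n" "a (Suc n)"] q(2)[of n] a by metis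
  then obtain seg where seg: "\<And>n. fpath ET (a n) (seg n) (a (Suc n))" "\<And>n. seg n \<noteq> []"
    "\<And>n k. k < length (seg n) - 1 \<Longrightarrow> fst (snd (seg n ! k)) = None"
    "\<And>n. fst (snd (seg n ! (length (seg n) - 1))) = Some (w n)"
    by metis
  obtain p W where pW: "p 0 = a 0" "\<And>i. (p i, W i, p (Suc i)) \<in> ET"
    "\<And>n j. j < length (seg n) \<Longrightarrow> W (length (concat_segs seg n) + j) = fst (snd (seg n ! j))"
    using concat_segs_infinite_path[of ET a seg] seg(1,2) by metis
  have "W \<in> path_words ET t0"
    using pW(1,2) a[of 0] q(1) by (intro path_wordsI[of p]) auto
  \<comment> \<open>F n is the position in W of the coloured edge that ends the n-th segment\<close>
  define F where "F n = length (concat_segs seg n) + (length (seg n) - 1)" for n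
  have "F n < F (Suc n)" for n
  proof -
    have "0 < length (seg n)" "0 < length (seg (Suc n))" using seg(2) by auto
    then show ?thesis unfolding F_def concat_segs_Suc length_append by linarith
  qed
  then have "strict_mono F" by (simp add: strict_mono_Suc_iff)
  have WF: "W (F n) = Some (w n)" for n
    using pW(3)[of "length (seg n) - 1" n] seg(2,4)[of n] unfolding F_def by simp
  have "{i. W i \<noteq> None} = range F"
  proof (intro antisym subsetI)
    fix i assume "i \<in> {i. W i \<noteq> None}"
    moreover obtain n j where nj: "i = length (concat_segs seg n) + j" "j < length (seg n)"
      using concat_segs_index[of seg] seg(2) by metis
    ultimately have "\<not> j < length (seg n) - 1" using pW(3) seg(3) by auto
    then have "i = F n" using nj unfolding F_def by simp
    then show "i \<in> range F" by simp
  qed (use WF in auto)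
  then have "eps_val val W = val (\<lambda>n. the (W (F n)))"
    by (rule eps_val_infinite[OF \<open>strict_mono F\<close>])
  then have "eps_val val W = val w" using WF by simp
  then show ?thesis using \<open>W \<in> path_words ET t0\<close> by (intro bexI[of _ W]) simp_all
qed

lemma gval_contr_le: "gval val contr_E (Inl t0) \<le> gval (eps_val val) ET t0"
proof (rule gval_least)
  fix w assume "w \<in> path_words contr_E (Inl t0)"
  then obtain q where "q 0 = Inl t0" "\<And>i. (q i, w i, q (Suc i)) \<in> contr_E"
    unfolding path_words_def by blast
  then obtain W where "W \<in> path_words ET t0" "val w \<le> eps_val val W"
    using contr_word_staying_Inl contr_word_leaving_Inl by metis
  then show "val w \<le> gval (eps_val val) ET t0"
    using gval_upper order.trans by metis
qed

lemma card_of_unfold_contr_le: "|unfold_V contr_E (Inl t0)| \<le>o |VT|"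
proof -
  let ?A = "{(b, c). \<exists>a. (a, c, b) \<in> contr_E}"
  have inf: "infinite VT" by (rule is_tree_infinite[OF tree])
  have A_V: "|?A| \<le>o |contr_V|"
    unfolding card_of_ordLeq[symmetric]
  proof (intro exI[of _ fst] conjI)
    show "inj_on fst ?A" using contr_in_colour_unique by (auto simp: inj_on_def)
    show "fst ` ?A \<subseteq> contr_V" using contr_E_subset by auto
  qed
  have V_VT: "|contr_V| \<le>o |VT \<times> (UNIV :: nat set)|"
    unfolding card_of_ordLeq[symmetric]
  proof (intro exI[of _ "case_sum (\<lambda>t. (t, 0)) id"] conjI)
    show "inj_on (case_sum (\<lambda>t. (t, 0)) id) contr_V" by (auto simp: inj_on_def contr_V_def)
    show "case_sum (\<lambda>t. (t, 0)) id ` contr_V \<subseteq> VT \<times> UNIV" by (auto simp: contr_V_def anchor_def)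
  qed
  have VT: "|VT \<times> (UNIV :: nat set)| \<le>o |VT|"
  proof -
    have "|UNIV :: nat set| \<le>o |VT|" using inf infinite_iff_card_of_nat by blast
    then show ?thesis using card_of_Times_infinite_simps(1)[OF inf] ordIso_imp_ordLeq by blast
  qed
  have "|?A| \<le>o |VT|" by (rule ordLeq_transitive[OF ordLeq_transitive[OF A_V V_VT] VT])
  then have "|lists ?A| \<le>o |VT|" by (rule card_of_lists_le_infinite[OF inf])
  moreover have "unfold_V contr_E (Inl t0) \<subseteq> lists ?A"
    using walk_set unfolding unfold_V_def by (fastforce simp: lists_eq_set)
  ultimately show ?thesis using card_of_mono1 ordLeq_transitive by blast
qed

lemma contr_walk_edge:
  assumes e: "(t, x, t1) \<in> ET"
  shows "x = None \<Longrightarrow> contr_walk (root_path t1) = contr_walk (root_path t)"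
    and "x = Some c \<Longrightarrow>
      (contr_walk (root_path t), c, contr_walk (root_path t1)) \<in> unfold_E contr_E (Inl t0)"
proof -
  have "t \<in> VT" using is_graph_edgeD(1)[OF graph e] .
  then have path: "root_path t1 = root_path t @ [(t, x, t1)]"
    using fpath_root_path e by (intro root_path_eq) (simp add: fpath_snoc)
  show "x = None \<Longrightarrow> contr_walk (root_path t1) = contr_walk (root_path t)"
    by (simp add: path contr_walk_def)
  assume x: "x = Some c"
  obtain a where a: "walk contr_E (Inl t0) (contr_walk (root_path t))"
    "walk_end (Inl t0) (contr_walk (root_path t)) = Inl a" "anchor a" "eps_reach a t"
    using contr_walk_root_path[OF fpath_root_path[OF \<open>t \<in> VT\<close>]] by blast
  have "(Inl a, c, Inl t1) \<in> contr_E"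
    using a(3,4) e x unfolding contr_E_def by blast
  then show "(contr_walk (root_path t), c, contr_walk (root_path t1)) \<in> unfold_E contr_E (Inl t0)"
    using a(1,2) x by (simp add: path contr_walk_def unfold_E_iff)
qed

lemma contr_walk_in_unfold: "t \<in> VT \<Longrightarrow> contr_walk (root_path t) \<in> unfold_V contr_E (Inl t0)"
  using contr_walk_root_path[OF fpath_root_path] unfolding unfold_V_def by blast

lemma root_path_root: "root_path t0 = []"
  by (rule root_path_eq) simp

lemma contr_walk_morphism:
  assumes \<psi>: "is_morphism (unfold_V contr_E (Inl t0)) (unfold_E contr_E (Inl t0)) V E \<psi>"
    and coloured: "\<And>u c u'. (u, c, u') \<in> E \<Longrightarrow> (\<iota> u, Some c, \<iota> u') \<in> E'"
    and loop: "\<And>u. u \<in> V \<Longrightarrow> (\<iota> u, None, \<iota> u) \<in> E'" and into: "\<And>u. u \<in> V \<Longrightarrow> \<iota> u \<in> V'"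
  shows "is_morphism VT ET V' E' (\<lambda>t. \<iota> (\<psi> (contr_walk (root_path t))))"
  unfolding is_morphism_def
proof (intro conjI ballI allI impI)
  have in_V: "\<psi> (contr_walk (root_path t)) \<in> V" if "t \<in> VT" for t
    using \<psi> contr_walk_in_unfold[OF that] unfolding is_morphism_def by blast
  then show "\<iota> (\<psi> (contr_walk (root_path t))) \<in> V'" if "t \<in> VT" for t
    using into that by blast
  fix t x t1 assume e: "(t, x, t1) \<in> ET"
  show "(\<iota> (\<psi> (contr_walk (root_path t))), x, \<iota> (\<psi> (contr_walk (root_path t1)))) \<in> E'"
  proof (cases x)
    case None
    then show ?thesis using contr_walk_edge(1)[OF e] loop in_V is_graph_edgeD(1)[OF graph e] by simp
  next
    case (Some c)
    then show ?thesis using contr_walk_edge(2)[OF e] \<psi> coloured unfolding is_morphism_def by blast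
  qed
qed

lemma contr_universal_morphism:
  fixes V :: "'g set" and E :: "('g \<times> 'c \<times> 'g) set" and K :: "'k set"
  assumes univ: "universal val K V E" and small: "card_lt VT K"
  obtains \<psi> where "is_morphism (unfold_V contr_E (Inl t0)) (unfold_E contr_E (Inl t0)) V E \<psi>"
    "gval val E (\<psi> []) \<le> gval (eps_val val) ET t0"
proof -
  let ?UV = "unfold_V contr_E (Inl t0)" and ?UE = "unfold_E contr_E (Inl t0)"
  have root: "Inl t0 \<in> contr_V" using anchor_root unfolding contr_V_def by blast
  obtain h where h: "inj_on h ?UV" "h ` ?UV \<subseteq> VT"
    using card_of_unfold_contr_le unfolding card_of_ordLeq[symmetric] by blast
  have "card_lt (h ` ?UV) K"
    using card_of_mono1[OF h(2)] small unfolding card_lt_def by (rule ordLeq_ordLess_trans)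
  then obtain \<psi> where \<psi>: "is_morphism ?UV ?UE V E \<psi>" "gval val E (\<psi> []) \<le> gval val ?UE []"
    using universal_tree_morphism[OF univ unfold_is_tree[OF contr_is_graph root] h(1)] by blast
  have "gval val ?UE [] \<le> gval val contr_E (Inl t0)"
    using gval_morphism_le[OF unfold_is_morphism[OF contr_is_graph root], of val "[]"] by simp
  then have "gval val E (\<psi> []) \<le> gval (eps_val val) ET t0"
    using \<psi>(2) gval_contr_le by (meson order.trans)
  then show ?thesis using that \<psi>(1) by blast
qed

end

section \<open>Epsilon-separated universal graphs\<close>

text \<open>The vertex type 'g \<times> nat is dictated by the statement; only the copy 'g \<times> {0} of V is
  used.\<close>

locale chain_partitioned_graph =
  fixes V :: "'g set" and E :: "('g \<times> 'c \<times> 'g) set" and r :: "('g \<times> 'g) set"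
    and f :: "'g \<Rightarrow> nat" and m :: nat
  assumes graph: "is_graph V E" and well_mono: "well_mono V E r" and cover: "chain_cover r V m f"
begin

definition sep_V :: "('g \<times> nat) set" where
  "sep_V = (\<lambda>u. (u, 0)) ` V"

definition sep_E :: "(('g \<times> nat) \<times> 'c option \<times> ('g \<times> nat)) set" where
  "sep_E = {((u, 0), Some c, (u', 0)) | u c u'. (u, c, u') \<in> E} \<union>
           {((u, 0), None, (u', 0)) | u u'. u \<in> V \<and> u' \<in> V \<and> (u', u) \<in> r \<and> f u = f u'}"

definition sep_part :: "nat \<Rightarrow> ('g \<times> nat) set" where
  "sep_part j = {(u, 0) | u. u \<in> V \<and> f u = j}"

lemma r_refl: "u \<in> V \<Longrightarrow> (u, u) \<in> r"
  and r_trans: "(u, v) \<in> r \<Longrightarrow> (v, w) \<in> r \<Longrightarrow> (u, w) \<in> r"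
  and r_antisym: "(u, v) \<in> r \<Longrightarrow> (v, u) \<in> r \<Longrightarrow> u = v"
  using well_mono
  unfolding well_mono_def mono_graph_def partial_order_on_def preorder_on_def refl_on_def trans_def
    antisym_def by blast+

lemma eps_order_sep_E:
  "(x, y) \<in> eps_order sep_E \<longleftrightarrow>
     (\<exists>a b. x = (a, 0) \<and> y = (b, 0) \<and> a \<in> V \<and> b \<in> V \<and> (a, b) \<in> r \<and> f a = f b)"
  unfolding eps_order_def sep_E_def by auto

lemma sep_E_Some: "(x, Some c, y) \<in> sep_E \<longleftrightarrow> (\<exists>a b. x = (a, 0) \<and> y = (b, 0) \<and> (a, c, b) \<in> E)"
  unfolding sep_E_def by auto

lemma sep_is_graph: "is_graph sep_V sep_E"
  unfolding is_graph_def
proof (intro conjI ballI)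
  show "sep_E \<subseteq> sep_V \<times> UNIV \<times> sep_V"
    unfolding sep_E_def sep_V_def using is_graph_edgeD[OF graph] by blast
  fix v assume "v \<in> sep_V"
  then have "(v, None, v) \<in> sep_E" unfolding sep_E_def sep_V_def using r_refl by blast
  then show "\<exists>c v'. (v, c, v') \<in> sep_E" by blast
qed

lemma sep_mono_graph: "mono_graph sep_V sep_E (eps_order sep_E)"
  unfolding mono_graph_def
proof (intro conjI allI impI)
  have "eps_order sep_E \<subseteq> sep_V \<times> sep_V" by (auto simp: eps_order_sep_E sep_V_def)
  moreover have "(x, x) \<in> eps_order sep_E" if "x \<in> sep_V" for x
    using that r_refl by (auto simp: eps_order_sep_E sep_V_def)
  moreover have "trans (eps_order sep_E)"
    unfolding trans_def by (auto simp: eps_order_sep_E dest: r_trans)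
  moreover have "antisym (eps_order sep_E)"
    unfolding antisym_def by (auto simp: eps_order_sep_E dest: r_antisym)
  ultimately show "partial_order_on sep_V (eps_order sep_E)"
    by (simp add: partial_order_on_def preorder_on_def refl_on_def)
next
  fix u v v' u' c
  assume "(v, u) \<in> eps_order sep_E \<and> (v, c, v') \<in> sep_E \<and> (u', v') \<in> eps_order sep_E"
  then obtain a b a' b' where ab: "v = (a, 0)" "u = (b, 0)" "a \<in> V" "b \<in> V" "(a, b) \<in> r" "f a = f b"
    and ab': "u' = (a', 0)" "v' = (b', 0)" "a' \<in> V" "b' \<in> V" "(a', b') \<in> r" "f a' = f b'"
    and e: "(v, c, v') \<in> sep_E"
    unfolding eps_order_sep_E by blast
  show "(u, c, u') \<in> sep_E"
  proof (cases c)
    case None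
    then have "(b', a) \<in> r" "f a = f b'" using e ab ab' unfolding sep_E_def by auto
    moreover from this have "(a', b) \<in> r" using r_trans[OF ab'(5) r_trans[OF _ ab(5)]] by blast
    ultimately show ?thesis using None ab ab' unfolding sep_E_def by auto
  next
    case (Some c')
    then have "(a, c', b') \<in> E" using e ab ab' sep_E_Some by simp
    then have "(b, c', a') \<in> E"
      using well_mono ab ab' unfolding well_mono_def mono_graph_def by blast
    then show ?thesis using Some ab ab' sep_E_Some by simp
  qed
qed

lemma sep_eps_separated: "eps_separated sep_V sep_E {..<m} sep_part"
  unfolding eps_separated_def
proof (intro conjI sep_is_graph sep_mono_graph ballI allI impI)
  show "(\<Union>j\<in>{..<m}. sep_part j) = sep_V"
    using cover unfolding sep_part_def sep_V_def chain_cover_def by blast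
  fix j a b assume "j \<in> {..<m}" "a \<in> sep_part j" "b \<in> sep_part j"
  then obtain x y where "a = (x, 0)" "b = (y, 0)" "x \<in> V" "y \<in> V" "f x = f y"
    unfolding sep_part_def by auto
  moreover from this have "(x, y) \<in> r \<or> (y, x) \<in> r"
    using cover unfolding chain_cover_def by blast
  ultimately show "(a, b) \<in> eps_order sep_E \<or> (b, a) \<in> eps_order sep_E"
    by (auto simp: eps_order_sep_E)
next
  fix v v' assume "(v, None, v') \<in> sep_E"
  then show "\<exists>j\<in>{..<m}. v \<in> sep_part j \<and> v' \<in> sep_part j"
    using cover unfolding sep_E_def sep_part_def chain_cover_def by auto
qed (auto simp: sep_part_def sep_V_def)

lemma sep_wf: "wf (eps_order sep_E - Id)"
proof (rule wf_subset[OF wf_inv_image[of "r - Id" fst]])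
  show "wf (r - Id)" using well_mono unfolding well_mono_def by blast
  show "eps_order sep_E - Id \<subseteq> inv_image (r - Id) fst"
    by (auto simp: eps_order_sep_E)
qed

sublocale sep: eps_mono_graph sep_V sep_E
  by unfold_locales (rule sep_is_graph, rule sep_mono_graph)

lemma sep_coloured_succ: "\<forall>x\<in>sep_V. \<exists>c y. (x, Some c, y) \<in> sep_E"
proof
  fix x assume "x \<in> sep_V"
  then obtain u where u: "x = (u, 0)" "u \<in> V" unfolding sep_V_def by blast
  then obtain c b where "(u, c, b) \<in> E" using is_graph_succE[OF graph] by blast
  then show "\<exists>c y. (x, Some c, y) \<in> sep_E" using u(1) sep_E_Some by blast
qed

lemma sep_coloured_morphism: "is_morphism sep_V sep.coloured V E fst"
  unfolding is_morphism_def sep_V_def sep.coloured_def by (auto simp: sep_E_Some)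

lemma sep_universal:
  fixes val :: "(nat \<Rightarrow> 'c) \<Rightarrow> 'x::{complete_linorder, wellorder}" and K :: "'k set"
  assumes univ: "universal val K V E"
  shows "universal (eps_val val) K sep_V sep_E"
  unfolding universal_def
proof (intro allI impI, elim conjE)
  fix VT :: "'k set" and ET :: "('k \<times> 'c option \<times> 'k) set" and t0
  assume tree: "is_tree VT ET t0" and small: "card_lt VT K"
  interpret T: eps_tree VT ET t0 val by unfold_locales (rule tree)
  obtain \<psi> where \<psi>: "is_morphism (unfold_V T.contr_E (Inl t0)) (unfold_E T.contr_E (Inl t0)) V E \<psi>"
    "gval val E (\<psi> []) \<le> gval (eps_val val) ET t0"
    using T.contr_universal_morphism[OF univ small] by blast
  define \<phi> where "\<phi> t = (\<psi> (T.contr_walk (T.root_path t)), 0 :: nat)" for t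
  have "is_morphism VT ET sep_V sep_E \<phi>"
    unfolding \<phi>_def
    by (rule T.contr_walk_morphism[OF \<psi>(1)]) (auto simp: sep_E_def sep_V_def r_refl)
  moreover have "gval (eps_val val) sep_E (\<phi> t0) \<le> gval (eps_val val) ET t0"
  proof -
    have root: "\<phi> t0 = (\<psi> [], 0)" by (simp add: \<phi>_def T.root_path_root T.contr_walk_def)
    have "\<phi> t0 \<in> sep_V"
      using \<open>is_morphism VT ET sep_V sep_E \<phi>\<close> T.root_in unfolding is_morphism_def by blast
    then have "gval (eps_val val) sep_E (\<phi> t0) \<le> gval val sep.coloured (\<phi> t0)"
      using sep.gval_eps_le_coloured sep_coloured_succ by blast
    also have "\<dots> \<le> gval val E (fst (\<phi> t0))"
      by (rule gval_morphism_le[OF sep_coloured_morphism])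
    finally show ?thesis using \<psi>(2) root by simp
  qed
  ultimately show "\<exists>\<phi>. is_morphism VT ET sep_V sep_E \<phi> \<and>
      gval (eps_val val) sep_E (\<phi> t0) \<le> gval (eps_val val) ET t0" by blast
qed

end

section \<open>Epsilon-memory\<close>

lemma is_strategy_image:
  assumes strat: "is_strategy V E VE v0 VS ES \<pi> s0" and inv: "\<And>s. g (h s) = s"
  shows "is_strategy V E VE v0 (h ` VS) (map_edge h ` ES) (\<pi> \<circ> g) (h s0)"
    and "gval val (map_edge h ` ES) (h s0) \<le> gval val ES s0"
proof -
  have graph: "is_graph VS ES" and morph: "is_morphism VS ES V E \<pi>" and "s0 \<in> VS" "\<pi> s0 = v0"
    using strat unfolding is_strategy_def by auto
  have inverse: "is_morphism (h ` VS) (map_edge h ` ES) VS ES g"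
    by (rule is_morphism_inv_image[OF graph]) (simp add: inv)
  show "is_strategy V E VE v0 (h ` VS) (map_edge h ` ES) (\<pi> \<circ> g) (h s0)"
    unfolding is_strategy_def
  proof (intro conjI ballI allI impI)
    show "is_graph (h ` VS) (map_edge h ` ES)" by (rule is_graph_image[OF graph])
    show "is_morphism (h ` VS) (map_edge h ` ES) V E (\<pi> \<circ> g)"
      by (rule is_morphism_comp[OF inverse morph])
    show "h s0 \<in> h ` VS" "(\<pi> \<circ> g) (h s0) = v0" using \<open>s0 \<in> VS\<close> \<open>\<pi> s0 = v0\<close> inv by auto
    fix v c v' s assume adam: "v \<in> V - VE" "(v, c, v') \<in> E" "s \<in> h ` VS" "(\<pi> \<circ> g) s = v"
    then obtain t where t: "t \<in> VS" "s = h t" "\<pi> t = v" using inv by auto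
    then obtain t' where "t' \<in> VS" "\<pi> t' = v'" "(t, c, t') \<in> ES"
      using strat adam(1,2) unfolding is_strategy_def by blast
    then show "\<exists>s'\<in>h ` VS. (\<pi> \<circ> g) s' = v' \<and> (s, c, s') \<in> map_edge h ` ES"
      using t(2) inv by (intro bexI[of _ "h t'"]) (auto simp: map_edge_image_iff)
  qed
  show "gval val (map_edge h ` ES) (h s0) \<le> gval val ES s0"
    using gval_morphism_le[OF inverse, of val "h s0"] inv by simp
qed

text \<open>Since the values are well-ordered, the value of a game is attained. The vertices of the
  strategy live in 'v + 's so as to accommodate both an optimal strategy over 's and, in case
  there is none, the trivial strategy given by the game graph itself.\<close>

lemma optimal_strategy:
  fixes val :: "(nat \<Rightarrow> 'd) \<Rightarrow> 'x::{complete_linorder, wellorder}"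
    and V :: "'v set" and E :: "('v \<times> 'd \<times> 'v) set"
  assumes "is_game V E VE v0"
  obtains VS :: "('v + 's) set" and ES \<pi> s0 where "is_strategy V E VE v0 VS ES \<pi> s0"
    "gval val ES s0 \<le> game_value val V E VE v0 TYPE('s)"
proof -
  have graph: "is_graph V E" and "v0 \<in> V" using assms unfolding is_game_def by auto
  define Strats where "Strats = {(VS :: 's set, ES, \<pi>, s0). is_strategy V E VE v0 VS ES \<pi> s0}"
  define strategy_value where "strategy_value S = (case S of (VS, ES, \<pi>, s0) \<Rightarrow> gval val ES s0)"
    for S :: "'s set \<times> ('s \<times> 'd \<times> 's) set \<times> ('s \<Rightarrow> 'v) \<times> 's"
  have game_value: "game_value val V E VE v0 TYPE('s) = (INF S \<in> Strats. strategy_value S)"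
    unfolding game_value_def Strats_def strategy_value_def by simp
  show ?thesis
  proof (cases "Strats = {}")
    case True
    have "is_strategy V E VE v0 V E id v0"
      unfolding is_strategy_def is_morphism_def
      using graph \<open>v0 \<in> V\<close> is_graph_edgeD[OF graph] by auto
    then show ?thesis
      using that[OF is_strategy_image(1)[where h = Inl and g = "case_sum id (\<lambda>_. v0)"]]
        True game_value
      by simp
  next
    case False
    then obtain S where "S \<in> Strats" "strategy_value S = game_value val V E VE v0 TYPE('s)"
      using INF_attained_wellorder game_value by metis
    moreover obtain VS ES \<pi> s0 where "S = (VS, ES, \<pi>, s0)" by (cases S) auto
    ultimately have "is_strategy V E VE v0 VS ES \<pi> s0"
      and "gval val ES s0 = game_value val V E VE v0 TYPE('s)"
      unfolding Strats_def strategy_value_def by auto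
    then show ?thesis
      using that[OF is_strategy_image(1)]
        is_strategy_image(2)[where h = Inr and g = "case_sum (\<lambda>_. s0) id"]
      by (metis sum.case(2) id_apply)
  qed
qed

lemma unfold_strategy:
  assumes strat: "is_strategy V E VE v0 VS ES \<pi> s0"
  shows "is_strategy V E VE v0 (unfold_V ES s0) (unfold_E ES s0) (\<pi> \<circ> walk_end s0) []"
proof -
  have graph: "is_graph VS ES" and morph: "is_morphism VS ES V E \<pi>" and "s0 \<in> VS" "\<pi> s0 = v0"
    using strat unfolding is_strategy_def by auto
  show ?thesis
    unfolding is_strategy_def
  proof (intro conjI ballI allI impI)
    show "is_graph (unfold_V ES s0) (unfold_E ES s0)" by (rule unfold_is_graph[OF graph \<open>s0 \<in> VS\<close>])
    show "is_morphism (unfold_V ES s0) (unfold_E ES s0) V E (\<pi> \<circ> walk_end s0)"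
      by (rule is_morphism_comp[OF unfold_is_morphism[OF graph \<open>s0 \<in> VS\<close>] morph])
    show "[] \<in> unfold_V ES s0" "(\<pi> \<circ> walk_end s0) [] = v0"
      using \<open>\<pi> s0 = v0\<close> by (auto simp: unfold_V_def)
    fix v c v' xs assume adam: "v \<in> V - VE" "(v, c, v') \<in> E" "xs \<in> unfold_V ES s0"
      "(\<pi> \<circ> walk_end s0) xs = v"
    have "walk_end s0 xs \<in> VS"
      using unfold_is_morphism[OF graph \<open>s0 \<in> VS\<close>] adam(3) unfolding is_morphism_def by blast
    moreover have "\<pi> (walk_end s0 xs) \<in> V - VE" "(\<pi> (walk_end s0 xs), c, v') \<in> E"
      using adam by auto
    ultimately obtain s' where "s' \<in> VS" "\<pi> s' = v'" "(walk_end s0 xs, c, s') \<in> ES"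
      using strat unfolding is_strategy_def by blast
    then show "\<exists>ys\<in>unfold_V ES s0. (\<pi> \<circ> walk_end s0) ys = v' \<and> (xs, c, ys) \<in> unfold_E ES s0"
      using adam(3)
      by (intro bexI[of _ "xs @ [(s', c)]"]) (auto simp: unfold_E_iff unfold_V_def walk_snoc)
  qed
qed

text \<open>A strategy S with a morphism \<phi> into an epsilon-separated graph yields an epsilon-strategy
  whose memory is the index j of a part P j: in state (v, j) it plays like the least element of P j
  among the \<phi>-images of the vertices of S over v. Monotonicity turns the edges of S into edges
  between these least elements, and an epsilon-edge never leaves a part.\<close>

locale strategy_into_separated =
  fixes V' :: "'u set" and E' :: "('u \<times> 'c option \<times> 'u) set" and M :: "'j set"
    and P :: "'j \<Rightarrow> 'u set"
    and V :: "'v set" and E :: "('v \<times> 'c option \<times> 'v) set" and VE :: "'v set" and v0 :: 'v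
    and VS :: "'s set" and ES :: "('s \<times> 'c option \<times> 's) set" and \<pi> :: "'s \<Rightarrow> 'v" and s0 :: 's
    and \<phi> :: "'s \<Rightarrow> 'u"
  assumes sep: "eps_separated V' E' M P" and wf: "wf (eps_order E' - Id)"
    and strat: "is_strategy V E VE v0 VS ES \<pi> s0" and morph: "is_morphism VS ES V' E' \<phi>"
begin

sublocale eps_mono_graph V' E'
  using sep unfolding eps_separated_def by unfold_locales auto

definition fibre_image :: "'v \<Rightarrow> 'j \<Rightarrow> 'u set" where
  "fibre_image v j = \<phi> ` {s \<in> VS. \<pi> s = v} \<inter> P j"

definition least :: "'v \<Rightarrow> 'j \<Rightarrow> 'u" where
  "least v j = (SOME \<mu>. \<mu> \<in> fibre_image v j \<and> (\<forall>d\<in>fibre_image v j. (\<mu>, d) \<in> eps_order E'))"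

definition mem_V :: "('v \<times> 'j) set" where
  "mem_V = {(v, j). j \<in> M \<and> fibre_image v j \<noteq> {}}"

definition mem_E :: "(('v \<times> 'j) \<times> 'c option \<times> ('v \<times> 'j)) set" where
  "mem_E = {((v, j), c, (v', j')) | v j c v' j'. (v, j) \<in> mem_V \<and> (v', j') \<in> mem_V \<and>
      (v, c, v') \<in> E \<and> (least v j, c, least v' j') \<in> E'}"

lemma part_in: "j \<in> M \<Longrightarrow> P j \<subseteq> V'"
  and part_cover: "x \<in> V' \<Longrightarrow> \<exists>j\<in>M. x \<in> P j"
  and part_disjoint: "i \<in> M \<Longrightarrow> j \<in> M \<Longrightarrow> x \<in> P i \<Longrightarrow> x \<in> P j \<Longrightarrow> i = j"
  and part_total: "j \<in> M \<Longrightarrow> a \<in> P j \<Longrightarrow> b \<in> P j \<Longrightarrow> (a, b) \<in> eps_order E' \<or> (b, a) \<in> eps_order E'"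
  and part_eps_edge: "(x, None, y) \<in> E' \<Longrightarrow> \<exists>j\<in>M. x \<in> P j \<and> y \<in> P j"
  using sep unfolding eps_separated_def by blast+

lemma least_minimal:
  assumes "(v, j) \<in> mem_V"
  shows "least v j \<in> fibre_image v j" "\<And>d. d \<in> fibre_image v j \<Longrightarrow> (least v j, d) \<in> eps_order E'"
proof -
  have j: "j \<in> M" and ne: "fibre_image v j \<noteq> {}" using assms unfolding mem_V_def by auto
  obtain \<mu> where \<mu>: "\<mu> \<in> fibre_image v j" "\<And>d. (d, \<mu>) \<in> eps_order E' - Id \<Longrightarrow> d \<notin> fibre_image v j"
    using wfE_min[OF wf] ne by (metis ex_in_conv)
  have "(\<mu>, d) \<in> eps_order E'" if d: "d \<in> fibre_image v j" for d
  proof -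
    have "\<mu> \<in> P j" "d \<in> P j" using \<mu>(1) d unfolding fibre_image_def by auto
    then have "(\<mu>, d) \<in> eps_order E' \<or> (d, \<mu>) \<in> eps_order E'" by (rule part_total[OF j])
    moreover have "(\<mu>, \<mu>) \<in> eps_order E'" using eps_order_refl part_in[OF j] \<open>\<mu> \<in> P j\<close> by blast
    ultimately show ?thesis using \<mu>(2)[of d] d by blast
  qed
  then have "\<exists>\<mu>. \<mu> \<in> fibre_image v j \<and> (\<forall>d\<in>fibre_image v j. (\<mu>, d) \<in> eps_order E')"
    using \<mu>(1) by blast
  then have "least v j \<in> fibre_image v j \<and> (\<forall>d\<in>fibre_image v j. (least v j, d) \<in> eps_order E')"
    unfolding least_def by (rule someI_ex)
  then show "least v j \<in> fibre_image v j" "\<And>d. d \<in> fibre_image v j \<Longrightarrow> (least v j, d) \<in> eps_order E'"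
    by blast+
qed

lemma least_witness:
  assumes "(v, j) \<in> mem_V"
  obtains s where "s \<in> VS" "\<pi> s = v" "\<phi> s = least v j"
proof -
  have "least v j \<in> \<phi> ` {s \<in> VS. \<pi> s = v}"
    using least_minimal(1)[OF assms] unfolding fibre_image_def by blast
  then obtain s where "s \<in> VS" "\<pi> s = v" "least v j = \<phi> s" by blast
  then show ?thesis using that by simp
qed

lemma mem_E_succ:
  assumes vj: "(v, j) \<in> mem_V" and s: "s \<in> VS" "\<pi> s = v" "\<phi> s = least v j"
    and e: "(s, c, s') \<in> ES"
  obtains j' where "(\<pi> s', j') \<in> mem_V" "((v, j), c, (\<pi> s', j')) \<in> mem_E"
proof -
  have "s' \<in> VS" using strat e unfolding is_strategy_def by (meson is_graph_edgeD(2))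
  then have "\<phi> s' \<in> V'" using morph unfolding is_morphism_def by blast
  then obtain j' where j': "j' \<in> M" "\<phi> s' \<in> P j'" using part_cover by blast
  then have in_fibre: "\<phi> s' \<in> fibre_image (\<pi> s') j'"
    using \<open>s' \<in> VS\<close> unfolding fibre_image_def by blast
  then have mem: "(\<pi> s', j') \<in> mem_V" using j'(1) unfolding mem_V_def by blast
  have "(\<phi> s, c, \<phi> s') \<in> E'" using morph e unfolding is_morphism_def by blast
  moreover have "(\<phi> s, \<phi> s) \<in> eps_order E'"
    using eps_order_refl morph s(1) unfolding is_morphism_def by blast
  ultimately have "(least v j, c, least (\<pi> s') j') \<in> E'"
    using mono least_minimal(2)[OF mem in_fibre] s(3) unfolding mono_graph_def by metis
  moreover have "(v, c, \<pi> s') \<in> E"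
    using strat e s(2) unfolding is_strategy_def is_morphism_def by blast
  ultimately show ?thesis using that[OF mem] vj mem unfolding mem_E_def by blast
qed

lemma mem_V_subset: "mem_V \<subseteq> V \<times> M"
proof
  fix x assume "x \<in> mem_V"
  then obtain v j where x: "x = (v, j)" "(v, j) \<in> mem_V" "j \<in> M" unfolding mem_V_def by auto
  then obtain s where "s \<in> VS" "\<pi> s = v" using least_witness by metis
  then have "v \<in> V" using strat unfolding is_strategy_def is_morphism_def by blast
  then show "x \<in> V \<times> M" using x by simp
qed

lemma mem_is_strategy:
  assumes "j0 \<in> M" "\<phi> s0 \<in> P j0"
  shows "is_strategy V E VE v0 mem_V mem_E fst (v0, j0)"
  unfolding is_strategy_def
proof (intro conjI ballI allI impI)
  show "is_graph mem_V mem_E"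
    unfolding is_graph_def
  proof (intro conjI ballI)
    show "mem_E \<subseteq> mem_V \<times> UNIV \<times> mem_V" unfolding mem_E_def by blast
    fix x assume "x \<in> mem_V"
    then obtain v j where x: "x = (v, j)" "(v, j) \<in> mem_V" by (cases x) auto
    obtain s where s: "s \<in> VS" "\<pi> s = v" "\<phi> s = least v j" by (rule least_witness[OF x(2)])
    then obtain c s' where "(s, c, s') \<in> ES"
      using strat is_graph_succE unfolding is_strategy_def by metis
    then show "\<exists>c y. (x, c, y) \<in> mem_E" using mem_E_succ[OF x(2) s] x(1) by metis
  qed
  show "is_morphism mem_V mem_E V E fst"
    using mem_V_subset unfolding is_morphism_def mem_E_def by auto
  have "s0 \<in> VS" "\<pi> s0 = v0" using strat unfolding is_strategy_def by auto
  then show "(v0, j0) \<in> mem_V" using assms unfolding mem_V_def fibre_image_def by blast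
  show "fst (v0, j0) = v0" by simp
  fix v c v' x assume adam: "v \<in> V - VE" "(v, c, v') \<in> E" "x \<in> mem_V" "fst x = v"
  then obtain j where x: "x = (v, j)" "(v, j) \<in> mem_V" by (cases x) auto
  obtain s where s: "s \<in> VS" "\<pi> s = v" "\<phi> s = least v j" by (rule least_witness[OF x(2)])
  then obtain s' where "\<pi> s' = v'" "(s, c, s') \<in> ES"
    using strat adam(1,2) unfolding is_strategy_def by blast
  then show "\<exists>y\<in>mem_V. fst y = v' \<and> (x, c, y) \<in> mem_E"
    using mem_E_succ[OF x(2) s] x(1) by (metis fst_conv)
qed

lemma mem_E_eps_keeps_memory: "((v, j), None, (v', j')) \<in> mem_E \<Longrightarrow> j = j'"
proof -
  assume e: "((v, j), None, (v', j')) \<in> mem_E"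
  then have mem: "(v, j) \<in> mem_V" "(v', j') \<in> mem_V" and "(least v j, None, least v' j') \<in> E'"
    unfolding mem_E_def by auto
  then obtain i where "i \<in> M" "least v j \<in> P i" "least v' j' \<in> P i" using part_eps_edge by blast
  moreover have "least v j \<in> P j" "least v' j' \<in> P j'" "j \<in> M" "j' \<in> M"
    using least_minimal(1)[OF mem(1)] least_minimal(1)[OF mem(2)] mem
    unfolding fibre_image_def mem_V_def by auto
  ultimately show "j = j'" using part_disjoint by metis
qed

lemma least_is_morphism: "is_morphism mem_V mem_E V' E' (\<lambda>(v, j). least v j)"
  unfolding is_morphism_def
proof (intro conjI ballI allI impI)
  fix x assume "x \<in> mem_V"
  then obtain v j where "x = (v, j)" "(v, j) \<in> mem_V" by (cases x) auto
  then show "(\<lambda>(v, j). least v j) x \<in> V'"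
    using least_minimal(1) part_in unfolding fibre_image_def mem_V_def by auto
qed (auto simp: mem_E_def)

end

lemma eps_strategy_of_morphism:
  fixes val :: "(nat \<Rightarrow> 'c option) \<Rightarrow> 'x::complete_lattice"
  assumes "eps_separated V' E' M P" "wf (eps_order E' - Id)"
    and "is_strategy V E VE v0 VS ES \<pi> s0" "is_morphism VS ES V' E' \<phi>"
  obtains VS' ES' j0 where "is_eps_strategy V E VE v0 M VS' ES' (v0, j0)"
    "gval val ES' (v0, j0) \<le> gval val E' (\<phi> s0)"
proof -
  interpret strategy_into_separated V' E' M P V E VE v0 VS ES \<pi> s0 \<phi>
    using assms by unfold_locales
  have "s0 \<in> VS" "\<pi> s0 = v0" using strat unfolding is_strategy_def by auto
  then have "\<phi> s0 \<in> V'" using morph unfolding is_morphism_def by blast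
  then obtain j0 where j0: "j0 \<in> M" "\<phi> s0 \<in> P j0" using part_cover by blast
  then have mem: "(v0, j0) \<in> mem_V" and fibre: "\<phi> s0 \<in> fibre_image v0 j0"
    using \<open>s0 \<in> VS\<close> \<open>\<pi> s0 = v0\<close> unfolding mem_V_def fibre_image_def by blast+
  have "gval val mem_E (v0, j0) \<le> gval val E' (least v0 j0)"
    using gval_morphism_le[OF least_is_morphism] by fastforce
  also have "\<dots> \<le> gval val E' (\<phi> s0)"
    using path_words_mono_graph[OF graph mono least_minimal(2)[OF mem fibre]] by (rule gval_mono)
  finally show ?thesis
    using that mem_V_subset mem_is_strategy[OF j0] mem_E_eps_keeps_memory
    unfolding is_eps_strategy_def by blast
qed

lemma eps_memory_le_of_universal:
  fixes val :: "(nat \<Rightarrow> 'c) \<Rightarrow> 'x::{complete_linorder, wellorder}"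
    and V' :: "'u set" and E' :: "('u \<times> 'c option \<times> 'u) set" and M :: "nat set"
  assumes sep: "eps_separated V' E' M P" and wf: "wf (eps_order E' - Id)"
    and M: "finite M" "card M \<le> m"
    and univ: "universal (eps_val val) (UNIV :: 'k set) V' E'"
    and small: "card_lt (UNIV :: (('v + 's) \<times> 'c option) list set) (UNIV :: 'k set)"
  shows "eps_memory_le val m TYPE('v) TYPE('s)"
  unfolding eps_memory_le_def
proof (intro allI impI)
  fix V :: "'v set" and E :: "('v \<times> 'c option \<times> 'v) set" and VE v0
  assume "is_game V E VE v0"
  then obtain VS :: "('v + 's) set" and ES \<pi> s0 where strat: "is_strategy V E VE v0 VS ES \<pi> s0"
    and opt: "gval (eps_val val) ES s0 \<le> game_value (eps_val val) V E VE v0 TYPE('s)"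
    by (rule optimal_strategy)
  have graph: "is_graph VS ES" and "s0 \<in> VS" using strat unfolding is_strategy_def by auto
  let ?UV = "unfold_V ES s0" and ?UE = "unfold_E ES s0"
  have "|UNIV :: (('v + 's) \<times> 'c option) list set| \<le>o |UNIV :: 'k set|"
    using small unfolding card_lt_def by (rule ordLess_imp_ordLeq)
  then obtain h :: "(('v + 's) \<times> 'c option) list \<Rightarrow> 'k" where h: "inj h"
    unfolding card_of_ordLeq[symmetric] by blast
  have "card_lt (h ` ?UV) (UNIV :: 'k set)"
    using card_of_image[of h ?UV] card_of_mono1[of ?UV UNIV] small unfolding card_lt_def
    by (meson ordLeq_ordLess_trans ordLeq_transitive subset_UNIV)
  then obtain \<phi> where \<phi>: "is_morphism ?UV ?UE V' E' \<phi>"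
    "gval (eps_val val) E' (\<phi> []) \<le> gval (eps_val val) ?UE []"
    using universal_tree_morphism[OF univ unfold_is_tree[OF graph \<open>s0 \<in> VS\<close>]] h
    by (meson inj_on_subset subset_UNIV)
  obtain VS' ES' j0 where eps: "is_eps_strategy V E VE v0 M VS' ES' (v0, j0)"
    and eps_value: "gval (eps_val val) ES' (v0, j0) \<le> gval (eps_val val) E' (\<phi> [])"
    using eps_strategy_of_morphism[OF sep wf unfold_strategy[OF strat] \<phi>(1)] by blast
  note eps_value
  also note \<phi>(2)
  also have "gval (eps_val val) ?UE [] \<le> gval (eps_val val) ES s0"
    using gval_morphism_le[OF unfold_is_morphism[OF graph \<open>s0 \<in> VS\<close>], of _ "[]"] by simp
  also note opt
  finally show "\<exists>(M :: nat set) VS ES s0. finite M \<and> card M \<le> m \<and>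
      is_eps_strategy V E VE v0 M VS ES s0 \<and>
      gval (eps_val val) ES s0 \<le> game_value (eps_val val) V E VE v0 TYPE('s)"
    using eps M by blast
qed

theorem proposition3p5:
  fixes val :: "(nat \<Rightarrow> 'c) \<Rightarrow> 'x::{complete_linorder, wellorder}"
    and m :: nat
  assumes "\<forall>K :: 'k set. \<exists>(V :: 'g set) (E :: ('g \<times> 'c \<times> 'g) set) r.
             is_graph V E \<and> well_mono V E r \<and> width_le V r m \<and> universal val K V E"
  shows "(\<forall>K :: 'k set. \<exists>(V :: ('g \<times> nat) set) (E :: (('g \<times> nat) \<times> 'c option \<times> ('g \<times> nat)) set)
             (M :: nat set) P.
             eps_separated V E M P \<and> wf (eps_order E - Id) \<and> finite M \<and> card M \<le> m \<and>
             universal (eps_val val) K V E)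
         \<and> (card_lt (UNIV :: (('v + 's) \<times> 'c option) list set) (UNIV :: 'k set)
             \<longrightarrow> eps_memory_le val m TYPE('v) TYPE('s))"
proof -
  have "\<exists>(V' :: ('g \<times> nat) set) (E' :: (('g \<times> nat) \<times> 'c option \<times> ('g \<times> nat)) set)
      (M :: nat set) P. eps_separated V' E' M P \<and> wf (eps_order E' - Id) \<and> finite M \<and> card M \<le> m \<and>
        universal (eps_val val) K V' E'" for K :: "'k set"
  proof -
    obtain V :: "'g set" and E r where
      G: "is_graph V E" "well_mono V E r" "width_le V r m" "universal val K V E"
      using assms by blast
    then obtain f where "chain_cover r V m f"
      using chain_cover_of_width unfolding well_mono_def mono_graph_def by blast
    then interpret chain_partitioned_graph V E r f m
      using G by unfold_locales
    show ?thesis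
      using sep_eps_separated sep_wf sep_universal[OF G(4)]
      by (intro exI[of _ sep_V] exI[of _ sep_E] exI[of _ "{..<m}"] exI[of _ sep_part]) simp
  qed
  then show ?thesis
    using eps_memory_le_of_universal by blast
qed

end
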